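(* Let $k$ be a dot-product kernel on $\mathbb S^d$ with Mercer decomposition $k(x,y)=\sum_{n=0}^\infty\mu_n\sum_{l=1}^{a_n}Y_{n,l}(x)Y_{n,l}(y)$, and suppose $\mu_n\asymp n^{-d\beta}$ for some $\beta>1$. Then, with respect to the uniform measure $\sigma$, the eigenvalue decay rate of the corresponding RKHS is $\beta$ (i.e. its eigenvalues $\lambda_i$ in non-increasing order satisfy $ci^{-\beta}\le\lambda_i\le Ci^{-\beta}$ for some $c,C>0$), and its embedding index is $\alpha_0=\frac1\beta$.
   Context: $\mathbb S^d=\{x\in\mathbb R^{d+1}:\|x\|=1\}$ with uniform probability measure $\sigma$. A dot-product kernel is $k(x,y)=f(\langle x,y\rangle)$. $\{Y_{n,l}:1\le l\le a_n,\ n\ge0\}$ is an orthonormal basis of $L^2(\mathbb S^d,\sigma)$ of spherical harmonics: $Y_{n,l}$ lie in the space $\mathcal H_n(\mathbb S^d)$ of (restrictions of) homogeneous harmonic polynomials of degree $n$, and $a_n=\dim\mathcal H_n(\mathbb S^d)=\binom{n+d}{n}-\binom{n-2+d}{n-2}$. For an RKHS $\mathcal H$ with kernel $k$ whose integral operator on $L^2(\mathbb S^d,\sigma)$ has eigenvalues $\lambda_i$ (non-increasing, with multiplicity) and orthonormal eigenfunctions $e_i$, let $M_\alpha$ be the smallest $A\ge0$ with $\sum_i\lambda_i^\alpha e_i(x)^2\le A^2$ for $\sigma$-a.e. $x$ ($=\infty$ if none); if the eigenvalue decay rate is $\beta$, the embedding index is $\alpha_0=\inf\{\alpha\in[\frac1\beta,1]:M_\alpha<\infty\}$.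 $a_n\asymp b_n$ means $ca_n\le b_n\le Ca_n$ for constants $c,C>0$. *)

theory Defs
  imports "HOL-Analysis.Analysis"
begin

text \<open>Uniform probability measure on the unit sphere S^d of R^(d+1) = real^'n
  (d+1 = CARD('n)): push-forward of the normalised Lebesgue measure on the unit ball
  under the radial projection x \<mapsto> x / norm x (the origin is a null set).\<close>
definition sphere_measure :: "(real ^ 'n) measure" where
  "sphere_measure =
     distr (uniform_measure lborel (ball 0 1)) (restrict_space borel (sphere 0 1))
       (\<lambda>x. if x = 0 then (SOME y. y \<in> sphere (0::real^'n) 1) else sgn x)"

definition hom_poly :: "nat \<Rightarrow> (real ^ 'n \<Rightarrow> real) \<Rightarrow> bool" where
  "hom_poly m p \<longleftrightarrow>
     (\<exists>c :: ('n \<Rightarrow> nat) \<Rightarrow> real. \<forall>x.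
        p x = (\<Sum>\<alpha>\<in>{\<alpha>. sum \<alpha> UNIV = m}. c \<alpha> * (\<Prod>i\<in>UNIV. (x $ i) ^ (\<alpha> i))))"

definition laplacian :: "(real ^ 'n \<Rightarrow> real) \<Rightarrow> real ^ 'n \<Rightarrow> real" where
  "laplacian p x = (\<Sum>i\<in>UNIV. (deriv ^^ 2) (\<lambda>t. p (x + t *\<^sub>R axis i 1)) 0)"

definition harmonic :: "(real ^ 'n \<Rightarrow> real) \<Rightarrow> bool" where
  "harmonic p \<longleftrightarrow> (\<forall>x. laplacian p x = 0)"

definition sph_harm_space :: "nat \<Rightarrow> (real ^ 'n \<Rightarrow> real) set" where
  "sph_harm_space m =
     {Y. \<exists>p. hom_poly m p \<and> harmonic p \<and> (\<forall>x\<in>sphere 0 1. Y x = p x)}"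

definition harm_dim :: "nat \<Rightarrow> nat \<Rightarrow> nat" where
  "harm_dim d n = (n + d choose n) - (if n \<ge> 2 then (n - 2 + d choose (n - 2)) else 0)"

text \<open>(lam, e) lists the (positive) eigenvalues, non-increasing and with multiplicity,
  together with orthonormal eigenfunctions, of the integral operator of the kernel k
  on L^2(M): the e_i are orthonormal eigenfunctions and every f in L^2 orthogonal to
  all e_i lies in the kernel of the integral operator.\<close>
definition spectral_system ::
  "'a measure \<Rightarrow> ('a \<Rightarrow> 'a \<Rightarrow> real) \<Rightarrow> (nat \<Rightarrow> real) \<Rightarrow> (nat \<Rightarrow> 'a \<Rightarrow> real) \<Rightarrow> bool" where
  "spectral_system M k lam e \<longleftrightarrow>
     (\<forall>i. e i \<in> borel_measurable M \<and> integrable M (\<lambda>x. (e i x)\<^sup>2)) \<and>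
     (\<forall>i j. (\<integral>x. e i x * e j x \<partial>M) = (if i = j then 1 else 0)) \<and>
     antimono lam \<and> (\<forall>i. lam i > 0) \<and>
     (\<forall>i. AE x in M. (\<integral>y. k x y * e i y \<partial>M) = lam i * e i x) \<and>
     (\<forall>f \<in> borel_measurable M. integrable M (\<lambda>x. (f x)\<^sup>2) \<longrightarrow>
         (\<forall>i. (\<integral>x. f x * e i x \<partial>M) = 0) \<longrightarrow>
         (AE x in M. (\<integral>y. k x y * f y \<partial>M) = 0))"

text \<open>Eigenvalue decay rate beta: c i^(-beta) \<le> lam_i \<le> C i^(-beta), i = 1,2,...
  (lam is indexed from 0, so lam i is the (i+1)-th eigenvalue).\<close>
definition eigenvalue_decay_rate :: "(nat \<Rightarrow> real) \<Rightarrow> real \<Rightarrow> bool" where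
  "eigenvalue_decay_rate lam \<beta> \<longleftrightarrow>
     (\<exists>c C. c > 0 \<and> C > 0 \<and>
        (\<forall>i. c * real (Suc i) powr (-\<beta>) \<le> lam i \<and> lam i \<le> C * real (Suc i) powr (-\<beta>)))"

text \<open>M_alpha = smallest A \<ge> 0 with sum_i lam_i^alpha e_i(x)^2 \<le> A^2 a.e. (\<infinity> if none).\<close>
definition embedding_M ::
  "'a measure \<Rightarrow> (nat \<Rightarrow> real) \<Rightarrow> (nat \<Rightarrow> 'a \<Rightarrow> real) \<Rightarrow> real \<Rightarrow> ennreal" where
  "embedding_M M lam e \<alpha> =
     Inf {A. AE x in M. (\<Sum>i. ennreal (lam i powr \<alpha> * (e i x)\<^sup>2)) \<le> A\<^sup>2}"

definition embedding_index ::
  "'a measure \<Rightarrow> (nat \<Rightarrow> real) \<Rightarrow> (nat \<Rightarrow> 'a \<Rightarrow> real) \<Rightarrow> real \<Rightarrow> real" where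
  "embedding_index M lam e \<beta> = Inf {\<alpha> \<in> {1/\<beta>..1}. embedding_M M lam e \<alpha> < top}"

end

theory Submission
  imports Defs "HOL-Probability.Probability"
begin

text \<open>The integral operator \<open>T\<close> of \<open>k\<close> acts diagonally on the spherical harmonics,
  \<open>T (Y n l) = \<mu> n * Y n l\<close>, and by completeness of the \<open>Y n l\<close> every eigenfunction of \<open>T\<close>
  with eigenvalue \<open>\<lambda> > 0\<close> lies in the span of the \<open>Y n l\<close> with \<open>\<mu> n = \<lambda>\<close>. Comparing
  orthonormal families by Bessel's inequality, the number of eigenvalues \<open>\<ge> t\<close> is therefore
  \<open>\<Sum>n | t \<le> \<mu> n. a n\<close>. Since \<open>a n\<close> grows like \<open>n ^ (d - 1)\<close> and \<open>\<mu> n\<close> decays like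
  \<open>n powr (- d * \<beta>)\<close>, this count is of order \<open>t powr (- 1 / \<beta>)\<close>, which is the decay
  \<open>\<lambda> i\<close> of order \<open>i powr (- \<beta>)\<close>.

  For the embedding index: \<open>\<sigma>\<close> and \<open>k\<close> are rotation invariant, so rotations map every
  eigenspace of \<open>T\<close> to itself. Hence the sum of \<open>(Y n l x)\<^sup>2\<close> over an eigenvalue level does
  not depend on \<open>x\<close> and equals the dimension of the level, and Bessel's inequality bounds
  \<open>\<Sum>i. \<lambda> i powr \<alpha> * (e i x)\<^sup>2\<close> by \<open>\<Sum>n. \<mu> n powr \<alpha> * a n\<close>, which is finite for all
  \<open>\<alpha> > 1 / \<beta>\<close>.\<close>

section \<open>Rotation invariance of the uniform measure on the sphere\<close>

lemma linear_borel_measurable: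
  "linear (f :: 'a::euclidean_space \<Rightarrow> 'b::euclidean_space) \<Longrightarrow> f \<in> borel_measurable borel"
  by (auto intro!: borel_measurable_continuous_onI linear_continuous_on simp: linear_conv_bounded_linear)

lemma orthogonal_transformation_borel_measurable:
  "orthogonal_transformation (Q :: 'a::euclidean_space \<Rightarrow> 'a) \<Longrightarrow> Q \<in> borel_measurable borel"
  by (simp add: linear_borel_measurable orthogonal_transformation_linear)

text \<open>The library computes the volume of orthogonal images only on \<open>real^'n\<close> with
  \<open>'n::{finite,wellorder}\<close>; a copy of \<open>'n\<close> ordered through \<open>to_nat\<close> transfers it to arbitrary
  finite index types.\<close>

typedef 'n ordered_copy = "UNIV :: 'n set" by simp

instance ordered_copy :: (finite) finite
proof
  have "(UNIV :: 'a ordered_copy set) = Abs_ordered_copy ` UNIV"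
    by (metis Rep_ordered_copy_inverse UNIV_I image_eqI subsetI subset_antisym)
  then show "finite (UNIV :: 'a ordered_copy set)"
    by (metis finite_imageI finite_class.finite_UNIV)
qed

instantiation ordered_copy :: (finite) linorder
begin
definition less_eq_ordered_copy :: "'a ordered_copy \<Rightarrow> 'a ordered_copy \<Rightarrow> bool" where
  "x \<le> y \<longleftrightarrow> to_nat (Rep_ordered_copy x) \<le> to_nat (Rep_ordered_copy y)"
definition less_ordered_copy :: "'a ordered_copy \<Rightarrow> 'a ordered_copy \<Rightarrow> bool" where
  "x < y \<longleftrightarrow> to_nat (Rep_ordered_copy x) < to_nat (Rep_ordered_copy y)"
instance
proof
  fix x y :: "'a ordered_copy"
  show "x \<le> y \<Longrightarrow> y \<le> x \<Longrightarrow> x = y"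
    unfolding less_eq_ordered_copy_def by (metis Rep_ordered_copy_inject antisym to_nat_split)
qed (auto simp: less_eq_ordered_copy_def less_ordered_copy_def)
end

instance ordered_copy :: (finite) wellorder
proof
  fix P :: "'a ordered_copy \<Rightarrow> bool" and a
  assume step: "\<And>x. (\<And>y. y < x \<Longrightarrow> P y) \<Longrightarrow> P x"
  have "\<forall>x. to_nat (Rep_ordered_copy x) = m \<longrightarrow> P x" for m
    by (induction m rule: less_induct) (use step in \<open>auto simp: less_ordered_copy_def\<close>)
  then show "P a" by blast
qed

definition to_ordered_copy :: "real^'n \<Rightarrow> real^('n ordered_copy)" where
  "to_ordered_copy x = (\<chi> i. x $ Rep_ordered_copy i)"

definition of_ordered_copy :: "real^('n ordered_copy) \<Rightarrow> real^'n" where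
  "of_ordered_copy y = (\<chi> i. y $ Abs_ordered_copy i)"

lemma to_of_ordered_copy [simp]: "to_ordered_copy (of_ordered_copy y) = y"
  and of_to_ordered_copy [simp]: "of_ordered_copy (to_ordered_copy x) = x"
  by (auto simp: to_ordered_copy_def of_ordered_copy_def vec_eq_iff
      Rep_ordered_copy_inverse Abs_ordered_copy_inverse)

lemma bij_Rep_ordered_copy: "bij_betw (Rep_ordered_copy :: 'n ordered_copy \<Rightarrow> 'n) UNIV UNIV"
  using type_definition.Rep_range[OF type_definition_ordered_copy]
  by (auto simp: bij_betw_def inj_def Rep_ordered_copy_inject)

lemma orthogonal_transformation_to_ordered_copy:
  "orthogonal_transformation (to_ordered_copy :: real^'n \<Rightarrow> _)"
proof -
  have "to_ordered_copy x \<bullet> to_ordered_copy y = x \<bullet> y" for x y :: "real^'n"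
    unfolding inner_vec_def to_ordered_copy_def
    using sum.reindex_bij_betw[OF bij_Rep_ordered_copy, of "\<lambda>i. x $ i * y $ i"] by simp
  moreover have "linear (to_ordered_copy :: real^'n \<Rightarrow> _)"
    by (auto intro!: linearI simp: to_ordered_copy_def vec_eq_iff)
  ultimately show ?thesis
    by (simp add: orthogonal_transformation_def)
qed

lemma orthogonal_transformation_of_ordered_copy:
  "orthogonal_transformation (of_ordered_copy :: _ \<Rightarrow> real^'n)"
proof -
  have "of_ordered_copy x \<bullet> of_ordered_copy y = x \<bullet> y" for x y :: "real^('n ordered_copy)"
    using orthogonal_transformation_to_ordered_copy
    by (metis orthogonal_transformation_def to_of_ordered_copy)
  moreover have "linear (of_ordered_copy :: _ \<Rightarrow> real^'n)"
    by (auto intro!: linearI simp: of_ordered_copy_def vec_eq_iff)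
  ultimately show ?thesis
    by (simp add: orthogonal_transformation_def)
qed

lemma prod_Basis_vec: "(\<Prod>b\<in>Basis. (v::real^'n) \<bullet> b) = (\<Prod>i\<in>UNIV. v $ i)"
proof -
  have B: "Basis = (\<lambda>i. axis i (1::real)) ` (UNIV :: 'n set)"
    by (auto simp: Basis_vec_def)
  have I: "inj (\<lambda>i. axis i (1::real) :: real^'n)"
    by (auto simp: inj_def axis_eq_axis)
  show ?thesis
    unfolding B prod.reindex[OF I] by (simp add: inner_axis o_def)
qed

lemma distr_lborel_of_ordered_copy: "distr lborel borel (of_ordered_copy :: _ \<Rightarrow> real^'n) = lborel"
proof (rule lborel_eqI[symmetric])
  fix l u :: "real^'n"
  assume le: "\<And>b. b \<in> Basis \<Longrightarrow> l \<bullet> b \<le> u \<bullet> b"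
  have "l $ i \<le> u $ i" for i
  proof -
    have "(axis i 1 :: real^'n) \<in> Basis" by simp
    then show ?thesis using le by (simp add: cart_eq_inner_axis)
  qed
  have "of_ordered_copy -` box l u = box (to_ordered_copy l) (to_ordered_copy u)"
    by (auto simp: mem_box_cart to_ordered_copy_def of_ordered_copy_def)
      (metis Abs_ordered_copy_inverse Rep_ordered_copy_inverse UNIV_I)+
  moreover have "(\<Prod>i\<in>UNIV. (to_ordered_copy u - to_ordered_copy l) $ i) = (\<Prod>i\<in>UNIV. (u - l) $ i)"
    using prod.reindex_bij_betw[OF bij_Rep_ordered_copy, of "\<lambda>i. (u - l) $ i"]
    by (simp add: to_ordered_copy_def)
  moreover have "to_ordered_copy l \<bullet> b \<le> to_ordered_copy u \<bullet> b" if "b \<in> Basis" for b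
    using that \<open>\<And>i. l $ i \<le> u $ i\<close> by (auto simp: Basis_vec_def inner_axis to_ordered_copy_def)
  moreover have "of_ordered_copy \<in> borel_measurable (borel :: (real^('n ordered_copy)) measure)"
    using linear_borel_measurable orthogonal_transformation_linear
      orthogonal_transformation_of_ordered_copy by blast
  ultimately show "emeasure (distr lborel borel of_ordered_copy) (box l u) = (\<Prod>b\<in>Basis. (u - l) \<bullet> b)"
    by (simp add: emeasure_distr emeasure_lborel_box_eq prod_Basis_vec)
qed simp

lemma distr_lborel_orthogonal_wellorder:
  fixes Q :: "real^'n::{finite,wellorder} \<Rightarrow> real^'n::_"
  assumes Q: "orthogonal_transformation Q"
  shows "distr lborel borel Q = lborel"
proof (rule lborel_eqI[symmetric])
  fix l u :: "real^'n::_"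
  assume "\<And>b. b \<in> Basis \<Longrightarrow> l \<bullet> b \<le> u \<bullet> b"
  have Q': "orthogonal_transformation (inv Q)"
    by (rule orthogonal_transformation_inv[OF Q])
  have preimage: "Q -` box l u = inv Q ` box l u"
    using orthogonal_transformation_bij[OF Q] by (simp add: bij_vimage_eq_inv_image)
  have measurable: "Q -` box l u \<in> sets borel"
    using measurable_sets_borel[OF orthogonal_transformation_borel_measurable[OF Q]] by simp
  have bounded: "bounded (Q -` box l u)"
    unfolding preimage using Q' orthogonal_transformation_linear linear_conv_bounded_linear
      bounded_linear_image bounded_box by blast
  have "measure lebesgue (inv Q ` box l u) = measure lebesgue (box l u)"
    by (rule measure_orthogonal_image[OF Q']) simp
  then have "measure lborel (Q -` box l u) = measure lborel (box l u)"
    using measurable preimage by simp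
  moreover have "emeasure lborel (Q -` box l u) \<noteq> \<top>" "emeasure lborel (box l u) \<noteq> \<top>"
    using emeasure_bounded_finite[OF bounded] emeasure_lborel_box_finite[of l u] by auto
  ultimately have "emeasure lborel (Q -` box l u) = emeasure lborel (box l u)"
    by (metis emeasure_eq_ennreal_measure)
  then show "emeasure (distr lborel borel Q) (box l u) = (\<Prod>b\<in>Basis. (u - l) \<bullet> b)"
    using \<open>\<And>b. b \<in> Basis \<Longrightarrow> l \<bullet> b \<le> u \<bullet> b\<close> orthogonal_transformation_borel_measurable[OF Q]
    by (simp add: emeasure_distr emeasure_lborel_box_eq)
qed simp

lemma distr_lborel_orthogonal:
  fixes Q :: "real^'n \<Rightarrow> real^'n"
  assumes Q: "orthogonal_transformation Q"
  shows "distr lborel borel Q = lborel"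
proof -
  define R where "R = to_ordered_copy \<circ> Q \<circ> of_ordered_copy"
  have R: "orthogonal_transformation R"
    unfolding R_def using Q orthogonal_transformation_to_ordered_copy
      orthogonal_transformation_of_ordered_copy by (intro orthogonal_transformation_compose)
  have QR: "Q \<circ> of_ordered_copy = of_ordered_copy \<circ> R"
    by (simp add: R_def fun_eq_iff)
  note meas = orthogonal_transformation_borel_measurable[OF Q]
    orthogonal_transformation_borel_measurable[OF R]
    linear_borel_measurable[OF orthogonal_transformation_linear[OF
      orthogonal_transformation_of_ordered_copy[where 'n='n]]]
  have "distr lborel borel Q = distr (distr lborel borel of_ordered_copy) borel Q"
    by (simp add: distr_lborel_of_ordered_copy)
  also have "\<dots> = distr lborel borel (of_ordered_copy \<circ> R)"
    using meas by (simp add: distr_distr QR)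
  also have "\<dots> = distr (distr lborel borel R) borel of_ordered_copy"
    using meas by (simp add: distr_distr)
  also have "\<dots> = lborel"
    by (simp add: distr_lborel_orthogonal_wellorder[OF R] distr_lborel_of_ordered_copy)
  finally show ?thesis .
qed

definition sphere_proj :: "real^'n \<Rightarrow> real^'n" where
  "sphere_proj x = (if x = 0 then (SOME y. y \<in> sphere (0::real^'n) 1) else sgn x)"

lemma sphere_proj_in_sphere: "sphere_proj (x::real^'n) \<in> sphere 0 1"
proof -
  obtain y :: "real^'n" where "norm y = 1"
    using vector_choose_size zero_le_one by blast
  then have "(SOME y. y \<in> sphere (0::real^'n) 1) \<in> sphere 0 1"
    by (intro someI_ex[of "\<lambda>y. y \<in> sphere 0 1"]) auto
  then show ?thesis
    by (auto simp: sphere_proj_def norm_sgn)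
qed

lemma sphere_proj_orthogonal:
  assumes "orthogonal_transformation Q" "x \<noteq> 0"
  shows "sphere_proj (Q x) = Q (sphere_proj x)"
proof -
  have "Q x \<noteq> 0"
    using assms by (metis norm_eq_zero orthogonal_transformation_norm)
  then show ?thesis
    using assms by (simp add: sphere_proj_def sgn_div_norm orthogonal_transformation_norm
        orthogonal_transformation_scaleR)
qed

lemma measurable_sphere_proj:
  "sphere_proj \<in> uniform_measure lborel (ball (0::real^'n) 1) \<rightarrow>\<^sub>M restrict_space borel (sphere 0 1)"
proof -
  have "sphere_proj \<in> borel \<rightarrow>\<^sub>M restrict_space borel (sphere (0::real^'n) 1)"
  proof (rule measurable_restrict_space2)
    show "sphere_proj \<in> borel_measurable (borel :: (real^'n) measure)"
      unfolding sphere_proj_def sgn_div_norm by measurable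
  qed (use sphere_proj_in_sphere in blast)
  then show ?thesis
    by (simp cong: measurable_cong_sets)
qed

lemma sphere_measure_eq_distr:
  "sphere_measure = distr (uniform_measure lborel (ball (0::real^'n) 1))
     (restrict_space borel (sphere 0 1)) sphere_proj"
  unfolding sphere_measure_def sphere_proj_def[abs_def] ..

lemma space_sphere_measure [simp]: "space (sphere_measure :: (real^'n) measure) = sphere 0 1"
  by (simp add: sphere_measure_def)

lemma sets_sphere_measure:
  "sets (sphere_measure :: (real^'n) measure) = sets (restrict_space borel (sphere 0 1))"
  by (simp add: sphere_measure_def)

lemma emeasure_lborel_ball_pos: "r > 0 \<Longrightarrow> emeasure lborel (ball (c::'a::euclidean_space) r) \<noteq> 0"
  using content_ball_pos[of r c] emeasure_lborel_ball_finite[of c r]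
  by (simp add: emeasure_eq_ennreal_measure)

lemma prob_space_sphere_measure: "prob_space (sphere_measure :: (real^'n) measure)"
proof -
  interpret prob_space "uniform_measure lborel (ball (0::real^'n) 1)"
    using emeasure_lborel_ball_pos[of 1 "0::real^'n"] emeasure_lborel_ball_finite[of "0::real^'n" 1]
    by (intro prob_space_uniform_measure) auto
  show ?thesis
    unfolding sphere_measure_eq_distr by (rule prob_space_distr[OF measurable_sphere_proj])
qed

lemma emeasure_sphere_measure:
  assumes "A \<in> sets (sphere_measure :: (real^'n) measure)"
  shows "emeasure sphere_measure A =
    emeasure lborel (ball 0 1 \<inter> sphere_proj -` A) / emeasure lborel (ball (0::real^'n) 1)"
proof -
  have A: "A \<in> sets (restrict_space borel (sphere (0::real^'n) 1))"
    using assms by (simp add: sets_sphere_measure)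
  have "sphere_proj -` A \<in> sets (borel :: (real^'n) measure)"
    using measurable_sets[OF measurable_sphere_proj A] by simp
  then show ?thesis
    unfolding sphere_measure_eq_distr
    by (simp add: emeasure_distr[OF measurable_sphere_proj A] emeasure_uniform_measure)
qed

lemma measurable_orthogonal_sphere_measure:
  assumes Q: "orthogonal_transformation (Q :: real^'n \<Rightarrow> real^'n)"
  shows "Q \<in> sphere_measure \<rightarrow>\<^sub>M sphere_measure"
proof -
  have "Q \<in> restrict_space borel (sphere (0::real^'n) 1) \<rightarrow>\<^sub>M restrict_space borel (sphere 0 1)"
    using Q orthogonal_transformation_borel_measurable[OF Q]
    by (intro measurable_restrict_space1 measurable_restrict_space2)
      (auto simp: orthogonal_transformation_norm)
  then show ?thesis
    by (simp cong: measurable_cong_sets add: sets_sphere_measure)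
qed

lemma distr_sphere_measure_orthogonal:
  assumes Q: "orthogonal_transformation (Q :: real^'n \<Rightarrow> real^'n)"
  shows "distr sphere_measure sphere_measure Q = sphere_measure"
proof (rule measure_eqI)
  fix A assume "A \<in> sets (distr sphere_measure sphere_measure Q)"
  then have A: "A \<in> sets (sphere_measure :: (real^'n) measure)" by simp
  have QA: "Q -` A \<inter> sphere 0 1 \<in> sets (sphere_measure :: (real^'n) measure)"
    using measurable_sets[OF measurable_orthogonal_sphere_measure[OF Q] A] by simp
  define E where "E = ball 0 1 \<inter> sphere_proj -` A"
  define F where "F = ball 0 1 \<inter> sphere_proj -` (Q -` A \<inter> sphere (0::real^'n) 1)"
  have "sphere_proj -` B \<in> sets borel" if "B \<in> sets (sphere_measure :: (real^'n) measure)" for B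
    using measurable_sets[OF measurable_sphere_proj] that by (simp add: sets_sphere_measure)
  then have "E \<in> sets borel" "F \<in> sets borel"
    using A QA unfolding E_def F_def by (metis sets.Int borel_open open_ball)+
  then have QE: "Q -` E \<in> sets borel"
    using measurable_sets_borel[OF orthogonal_transformation_borel_measurable[OF Q]] by blast
  \<comment> \<open>\<open>sphere_proj\<close> commutes with \<open>Q\<close> only off the origin, where its value is arbitrary\<close>
  have "F - {0} = Q -` E - {0}"
    using Q sphere_proj_orthogonal[OF Q] sphere_proj_in_sphere
    by (auto simp: F_def E_def orthogonal_transformation_norm)
  moreover have null: "{0} \<in> null_sets (lborel :: (real^'n) measure)"
    by (rule finite_imp_null_set_lborel) simp
  ultimately have "emeasure lborel F = emeasure lborel (Q -` E)"
    using emeasure_Diff_null_set[OF null] \<open>F \<in> sets borel\<close> QE by (metis sets_lborel)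
  also have "\<dots> = emeasure (distr lborel borel Q) E"
    using \<open>E \<in> sets borel\<close> orthogonal_transformation_borel_measurable[OF Q]
    by (simp add: emeasure_distr)
  also have "\<dots> = emeasure lborel E"
    by (simp add: distr_lborel_orthogonal[OF Q])
  finally show "emeasure (distr sphere_measure sphere_measure Q) A = emeasure sphere_measure A"
    using A QA
    by (simp add: emeasure_distr[OF measurable_orthogonal_sphere_measure[OF Q] A]
        emeasure_sphere_measure F_def E_def)
qed simp

lemma integral_sphere_measure_orthogonal:
  assumes Q: "orthogonal_transformation (Q :: real^'n \<Rightarrow> real^'n)"
    and g: "(g :: real^'n \<Rightarrow> real) \<in> borel_measurable sphere_measure"
  shows "(\<integral>x. g (Q x) \<partial>sphere_measure) = (\<integral>x. g x \<partial>sphere_measure)"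
  by (metis distr_sphere_measure_orthogonal[OF Q] g integral_distr
      measurable_orthogonal_sphere_measure[OF Q])

lemma ball_subset_sphere_proj_vimage_cap:
  fixes x0 :: "real^'n"
  assumes x0: "x0 \<in> sphere 0 1" and r: "r > 0"
  shows "ball ((1/2) *\<^sub>R x0) (min (r/4) (1/4)) \<subseteq> ball 0 1 \<inter> sphere_proj -` (ball x0 r \<inter> sphere 0 1)"
proof
  fix z assume "z \<in> ball ((1/2) *\<^sub>R x0) (min (r/4) (1/4))"
  then have dz: "norm (z - (1/2) *\<^sub>R x0) < min (r/4) (1/4)"
    by (simp add: dist_norm norm_minus_commute)
  have "\<bar>norm z - norm ((1/2) *\<^sub>R x0)\<bar> \<le> norm (z - (1/2) *\<^sub>R x0)"
    by (rule norm_triangle_ineq3)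
  then have norm_z: "\<bar>norm z - 1/2\<bar> \<le> norm (z - (1/2) *\<^sub>R x0)"
    using x0 by simp
  then have z: "0 < norm z" "norm z < 1"
    using dz by linarith+
  have "sgn z - x0 = (1 / norm z - 2) *\<^sub>R z + 2 *\<^sub>R (z - (1/2) *\<^sub>R x0)"
    by (simp add: sgn_div_norm algebra_simps inverse_eq_divide)
  then have "norm (sgn z - x0) \<le> norm ((1 / norm z - 2) *\<^sub>R z) + norm (2 *\<^sub>R (z - (1/2) *\<^sub>R x0))"
    by (simp only: norm_triangle_ineq)
  also have "\<dots> = \<bar>1 / norm z - 2\<bar> * norm z + 2 * norm (z - (1/2) *\<^sub>R x0)"
    by simp
  also have "\<bar>1 / norm z - 2\<bar> * norm z = \<bar>1 - 2 * norm z\<bar>"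
    using z by (simp add: abs_mult[symmetric] field_simps)
  also have "\<dots> \<le> 2 * norm (z - (1/2) *\<^sub>R x0)"
    using norm_z by linarith
  finally have "dist x0 (sgn z) < r"
    using dz by (simp add: dist_norm norm_minus_commute)
  then show "z \<in> ball 0 1 \<inter> sphere_proj -` (ball x0 r \<inter> sphere 0 1)"
    using z by (auto simp: sphere_proj_def norm_sgn)
qed

lemma emeasure_sphere_measure_cap_pos:
  assumes x0: "x0 \<in> sphere (0::real^'n) 1" and r: "r > 0"
  shows "emeasure sphere_measure (ball x0 r \<inter> sphere 0 1) \<noteq> 0"
proof -
  have cap': "ball x0 r \<inter> sphere 0 1 \<in> sets (restrict_space borel (sphere (0::real^'n) 1))"
    by (auto simp: sets_restrict_space_iff)
  then have cap: "ball x0 r \<inter> sphere 0 1 \<in> sets (sphere_measure :: (real^'n) measure)"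
    by (simp add: sets_sphere_measure)
  have "ball 0 1 \<inter> sphere_proj -` (ball x0 r \<inter> sphere 0 1) \<in> sets lborel"
    using measurable_sets[OF measurable_sphere_proj cap'] by auto
  then have "emeasure lborel (ball ((1/2) *\<^sub>R x0) (min (r/4) (1/4)))
      \<le> emeasure lborel (ball 0 1 \<inter> sphere_proj -` (ball x0 r \<inter> sphere 0 1))"
    by (rule emeasure_mono[OF ball_subset_sphere_proj_vimage_cap[OF x0 r]])
  moreover have "emeasure lborel (ball ((1/2) *\<^sub>R x0) (min (r/4) (1/4))) \<noteq> 0"
    using r by (intro emeasure_lborel_ball_pos) simp
  ultimately have "emeasure lborel (ball 0 1 \<inter> sphere_proj -` (ball x0 r \<inter> sphere 0 1)) \<noteq> 0"
    by (metis le_zero_eq)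
  moreover have "emeasure lborel (ball (0::real^'n) 1) \<noteq> \<top>"
    using emeasure_lborel_ball_finite[of "0::real^'n" 1] by simp
  ultimately show ?thesis
    unfolding emeasure_sphere_measure[OF cap] by (simp add: ennreal_divide_eq_0_iff)
qed

lemma nonneg_if_AE_nonneg_continuous_on_sphere:
  assumes u: "continuous_on (sphere 0 1) u"
    and ae: "AE x in sphere_measure. u x \<ge> (0::real)"
    and x0: "x0 \<in> sphere (0::real^'n) 1"
  shows "u x0 \<ge> 0"
proof (rule ccontr)
  assume "\<not> u x0 \<ge> 0"
  then obtain r where r: "r > 0"
    and close: "\<And>x. x \<in> sphere 0 1 \<Longrightarrow> dist x x0 < r \<Longrightarrow> dist (u x) (u x0) < - u x0"
    using u x0 unfolding continuous_on_iff by (metis neg_0_less_iff_less not_le)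
  have neg: "u x < 0" if "x \<in> sphere 0 1" "dist x x0 < r" for x
    using close[OF that] by (simp add: dist_real_def)
  from ae obtain N where N: "{x \<in> sphere 0 1. \<not> u x \<ge> 0} \<subseteq> N"
    "emeasure sphere_measure N = 0" "N \<in> sets (sphere_measure :: (real^'n) measure)"
    by (auto elim: AE_E)
  have "ball x0 r \<inter> sphere 0 1 \<subseteq> N"
    using N(1) neg by (force simp: dist_commute)
  then have "emeasure sphere_measure (ball x0 r \<inter> sphere 0 1) = 0"
    using emeasure_mono[OF _ N(3)] N(2) by (metis le_zero_eq)
  then show False
    using emeasure_sphere_measure_cap_pos[OF x0 r] by simp
qed

lemma finite_measure_sphere_measure: "finite_measure (sphere_measure :: (real^'n) measure)"
  using prob_space_sphere_measure prob_space_def by blast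

lemma borel_measurable_sphere_measure_if_continuous:
  "continuous_on (sphere 0 1) g \<Longrightarrow> (g :: real^'n \<Rightarrow> real) \<in> borel_measurable sphere_measure"
  using borel_measurable_continuous_on_restrict measurable_cong_sets[OF sets_sphere_measure refl]
  by blast

section \<open>Spherical harmonics: continuity and dimensions\<close>

lemma sph_harm_space_continuous_on:
  assumes "Y \<in> sph_harm_space m"
  shows "continuous_on (sphere 0 1) Y"
proof -
  obtain p c where Y: "\<forall>x\<in>sphere 0 1. Y x = p x"
    and p: "\<And>x. p x = (\<Sum>\<alpha>\<in>{\<alpha>. sum \<alpha> UNIV = m}. c \<alpha> * (\<Prod>i\<in>UNIV. (x $ i) ^ (\<alpha> i)))"
    using assms unfolding sph_harm_space_def hom_poly_def by blast
  have "continuous_on (sphere 0 1) p"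
    unfolding p by (intro continuous_intros)
  then show ?thesis
    using Y continuous_on_eq by force
qed

lemma harm_dim_eq: "harm_dim d n = (n + d choose d) - (if n \<ge> 2 then n - 2 + d choose d else 0)"
proof -
  have "(n + d choose n) = (n + d choose d)" "(n - 2 + d choose (n - 2)) = (n - 2 + d choose d)"
    using binomial_symmetric[of n "n + d"] binomial_symmetric[of "n - 2" "n - 2 + d"] by simp_all
  then show ?thesis
    by (simp only: harm_dim_def)
qed

lemma harm_dim_0 [simp]: "harm_dim d 0 = 1"
  and harm_dim_1 [simp]: "harm_dim d (Suc 0) = Suc d"
  by (simp_all add: harm_dim_def)

lemma harm_dim_Suc_Suc:
  "harm_dim (Suc e) (Suc (Suc m)) = (m + e + 2 choose e) + (m + e + 1 choose e)"
proof -
  have "(m + Suc e + 2 choose Suc e) = (m + e + 2 choose e) + (m + e + 1 choose e) + (m + Suc e choose Suc e)"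
    using binomial_Suc_Suc[of "m + e + 2" e] binomial_Suc_Suc[of "m + e + 1" e] by simp
  then show ?thesis
    by (simp add: harm_dim_eq)
qed

lemma harm_dim_pos: "d \<ge> 1 \<Longrightarrow> harm_dim d n \<ge> 1"
  by (cases d; induction n rule: induct_nat_012) (auto simp: harm_dim_Suc_Suc Suc_le_eq)

lemma harm_dim_le: "d \<ge> 1 \<Longrightarrow> harm_dim d n \<le> 2 * (n + d) ^ (d - 1)"
proof (induction n rule: induct_nat_012)
  case 0
  then show ?case by (simp add: Suc_le_eq)
next
  case 1
  have "Suc d \<le> 2 * Suc d ^ (d - 1)"
  proof (cases "d = 1")
    case False
    then have "Suc d ^ 1 \<le> Suc d ^ (d - 1)"
      using 1 by (intro power_increasing) auto
    then show ?thesis by simp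
  qed simp
  then show ?case by simp
next
  case (ge2 m)
  then obtain e where e: "d = Suc e" by (cases d) auto
  have "(m + e + 2 choose e) + (m + e + 1 choose e) \<le> (m + e + 2) ^ e + (m + e + 2) ^ e"
    using binomial_le_pow[of e "m + e + 2"] binomial_le_pow[of e "m + e + 1"]
      power_mono[of "m + e + 1" "m + e + 2" e] by simp
  also have "\<dots> \<le> 2 * (Suc (Suc m) + d) ^ (d - 1)"
    using power_mono[of "m + e + 2" "Suc (Suc m) + d" e] e by simp
  finally show ?case
    by (simp add: e harm_dim_Suc_Suc)
qed

lemma harm_dim_le_powr:
  assumes d: "d \<ge> 1" and n: "n \<ge> 1"
  shows "real (harm_dim d n) \<le> 2 * (1 + real d) ^ (d - 1) * real n powr (real d - 1)"
proof -
  have "real (harm_dim d n) \<le> 2 * real (n + d) ^ (d - 1)"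
    using harm_dim_le[OF d, of n] by (metis of_nat_le_iff of_nat_mult of_nat_numeral of_nat_power)
  also have "\<dots> \<le> 2 * ((1 + real d) * real n) ^ (d - 1)"
  proof (intro mult_left_mono power_mono)
    have "real d * 1 \<le> real d * real n"
      using n by (intro mult_left_mono) auto
    then show "real (n + d) \<le> (1 + real d) * real n"
      using n by (simp add: algebra_simps)
  qed simp_all
  also have "\<dots> = 2 * (1 + real d) ^ (d - 1) * real n powr (real d - 1)"
    using n d by (simp add: power_mult_distrib powr_realpow[symmetric] of_nat_diff)
  finally show ?thesis .
qed

lemma sum_harm_dim: "(\<Sum>n<Suc (Suc M). harm_dim d n) = (Suc M + d choose d) + (M + d choose d)"
proof (induction M)
  case (Suc M)
  have "(M + d choose d) \<le> (Suc (Suc M) + d choose d)"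
    by (rule binomial_right_mono) simp
  then show ?case
    using Suc by (simp add: harm_dim_eq)
qed simp

lemma sum_harm_dim_le: "(\<Sum>n<M. harm_dim d n) \<le> 2 * (M + d) ^ d"
proof (induction M rule: induct_nat_012)
  case (ge2 M')
  have "(\<Sum>n<Suc (Suc M'). harm_dim d n) = (Suc M' + d choose d) + (M' + d choose d)"
    by (rule sum_harm_dim)
  also have "\<dots> \<le> 2 * (Suc M' + d choose d)"
    using binomial_right_mono[of "M' + d" "Suc M' + d" d] by simp
  also have "\<dots> \<le> 2 * (Suc (Suc M') + d) ^ d"
    using binomial_le_pow[of d "Suc M' + d"] power_mono[of "Suc M' + d" "Suc (Suc M') + d" d] by simp
  finally show ?case .
qed simp_all

lemma sum_harm_dim_ge:
  assumes "d \<ge> 1"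
  shows "(real M / real d) ^ d \<le> real (\<Sum>n<Suc M. harm_dim d n)"
proof (cases M)
  case (Suc M')
  have "(real M / real d) ^ d \<le> (real (M + d) / real d) ^ d"
    using assms by (intro power_mono divide_right_mono) auto
  also have "\<dots> \<le> real (M + d choose d)"
    by (rule binomial_ge_n_over_k_pow_k) simp
  also have "(M + d choose d) \<le> (\<Sum>n<Suc M. harm_dim d n)"
    using sum_harm_dim[of d M'] Suc by simp
  finally show ?thesis by simp
qed (use assms in \<open>simp add: power_0_left\<close>)

section \<open>Square-integrable functions and Bessel's inequality\<close>

definition square_integrable :: "'a measure \<Rightarrow> ('a \<Rightarrow> real) \<Rightarrow> bool" where
  "square_integrable M g \<longleftrightarrow> g \<in> borel_measurable M \<and> integrable M (\<lambda>x. (g x)\<^sup>2)"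

lemma square_integrableD:
  "square_integrable M g \<Longrightarrow> g \<in> borel_measurable M"
  "square_integrable M g \<Longrightarrow> integrable M (\<lambda>x. (g x)\<^sup>2)"
  by (simp_all add: square_integrable_def)

lemma abs_mult_le_half_sum_squares: "\<bar>(a::real) * b\<bar> \<le> (a\<^sup>2 + b\<^sup>2) / 2"
  using sum_squares_bound[of "\<bar>a\<bar>" "\<bar>b\<bar>"] by (simp add: abs_mult)

lemma integrable_mult_square_integrable:
  assumes "square_integrable M g" "square_integrable M h"
  shows "integrable M (\<lambda>x. g x * h x)"
proof (rule Bochner_Integration.integrable_bound)
  show "integrable M (\<lambda>x. ((g x)\<^sup>2 + (h x)\<^sup>2) / 2)"
    using assms by (auto simp: square_integrable_def)
  show "AE x in M. norm (g x * h x) \<le> norm (((g x)\<^sup>2 + (h x)\<^sup>2) / 2)"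
    using abs_mult_le_half_sum_squares by auto
qed (use assms in \<open>auto simp: square_integrable_def\<close>)

lemma (in finite_measure) integrable_square_integrable:
  assumes "square_integrable M g"
  shows "integrable M g"
proof (rule Bochner_Integration.integrable_bound)
  show "integrable M (\<lambda>x. (1 + (g x)\<^sup>2) / 2)"
    using assms by (auto simp: square_integrable_def)
  show "AE x in M. norm (g x) \<le> norm ((1 + (g x)\<^sup>2) / 2)"
    using abs_mult_le_half_sum_squares[of 1] by auto
qed (use assms in \<open>auto simp: square_integrable_def\<close>)

lemma square_integrable_add:
  assumes g: "square_integrable M g" and h: "square_integrable M h"
  shows "square_integrable M (\<lambda>x. g x + h x)"
proof -
  have "integrable M (\<lambda>x. (g x)\<^sup>2 + (h x)\<^sup>2 + 2 * (g x * h x))"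
    using g h integrable_mult_square_integrable[OF g h] by (auto simp: square_integrable_def)
  moreover have "(\<lambda>x. g x + h x) \<in> borel_measurable M"
    using g h by (auto simp: square_integrable_def)
  ultimately show ?thesis
    by (simp add: square_integrable_def power2_sum mult.assoc)
qed

lemma square_integrable_cmult: "square_integrable M g \<Longrightarrow> square_integrable M (\<lambda>x. c * g x)"
  by (auto simp: square_integrable_def power_mult_distrib)

lemma square_integrable_sum:
  "finite I \<Longrightarrow> (\<And>i. i \<in> I \<Longrightarrow> square_integrable M (g i)) \<Longrightarrow>
    square_integrable M (\<lambda>x. \<Sum>i\<in>I. g i x)"
  by (induction I rule: finite_induct) (auto simp: square_integrable_add, simp add: square_integrable_def)

lemma square_integrable_diff:
  "square_integrable M g \<Longrightarrow> square_integrable M h \<Longrightarrow> square_integrable M (\<lambda>x. g x - h x)"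
  using square_integrable_add[of M g "\<lambda>x. (-1) * h x"] square_integrable_cmult[of M h "-1"] by simp

lemma (in finite_measure) square_integrable_bounded:
  assumes "h \<in> borel_measurable M" "\<And>x. x \<in> space M \<Longrightarrow> \<bar>h x\<bar> \<le> B"
  shows "square_integrable M h"
proof -
  have "integrable M (\<lambda>x. (h x)\<^sup>2)"
  proof (rule integrable_const_bound[where B="B\<^sup>2"])
    show "AE x in M. norm ((h x)\<^sup>2) \<le> B\<^sup>2"
    proof (rule AE_I2)
      fix x assume "x \<in> space M"
      then have "\<bar>h x\<bar>\<^sup>2 \<le> B\<^sup>2"
        using assms(2) by (intro power_mono) auto
      then show "norm ((h x)\<^sup>2) \<le> B\<^sup>2" by simp
    qed
  qed (use assms(1) in measurable)
  then show ?thesis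
    using assms(1) by (simp add: square_integrable_def)
qed

lemma integral_sum_sum:
  assumes "\<And>n l. n \<in> A \<Longrightarrow> l \<in> B n \<Longrightarrow> integrable M (h n l)"
  shows "(\<integral>x. (\<Sum>n\<in>A. \<Sum>l\<in>B n. h n l x) \<partial>M) = (\<Sum>n\<in>A. \<Sum>l\<in>B n. \<integral>x. h n l x \<partial>M)"
  using assms by (simp add: Bochner_Integration.integral_sum Bochner_Integration.integrable_sum)

lemma integral_mult_finite_expansion:
  assumes K: "finite K" and expansion: "AE x in M. h x = (\<Sum>j\<in>K. c j * w j x)"
    and h: "h \<in> borel_measurable M"
    and g: "square_integrable M g" and w: "\<And>j. j \<in> K \<Longrightarrow> square_integrable M (w j)"
  shows "(\<integral>x. g x * h x \<partial>M) = (\<Sum>j\<in>K. c j * (\<integral>x. g x * w j x \<partial>M))"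
proof -
  have "(\<integral>x. g x * h x \<partial>M) = (\<integral>x. (\<Sum>j\<in>K. c j * (g x * w j x)) \<partial>M)"
  proof (rule integral_cong_AE)
    show "(\<lambda>x. g x * h x) \<in> borel_measurable M"
      using square_integrableD(1)[OF g] h by measurable
    show "(\<lambda>x. \<Sum>j\<in>K. c j * (g x * w j x)) \<in> borel_measurable M"
      using square_integrableD(1)[OF g] square_integrableD(1)[OF w]
      by (intro borel_measurable_sum) measurable
    show "AE x in M. g x * h x = (\<Sum>j\<in>K. c j * (g x * w j x))"
      using expansion by eventually_elim (simp add: sum_distrib_left algebra_simps)
  qed
  also have "\<dots> = (\<Sum>j\<in>K. c j * (\<integral>x. g x * w j x \<partial>M))"
    using g w by (simp add: integrable_mult_square_integrable)
  finally show ?thesis .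
qed

definition orthonormal_family :: "'a measure \<Rightarrow> 'i set \<Rightarrow> ('i \<Rightarrow> 'a \<Rightarrow> real) \<Rightarrow> bool" where
  "orthonormal_family M I e \<longleftrightarrow> (\<forall>i\<in>I. square_integrable M (e i)) \<and>
     (\<forall>i\<in>I. \<forall>i'\<in>I. (\<integral>x. e i x * e i' x \<partial>M) = (if i = i' then 1 else 0))"

lemma orthonormal_familyD:
  assumes "orthonormal_family M I e" "i \<in> I"
  shows "square_integrable M (e i)" "(\<integral>x. (e i x)\<^sup>2 \<partial>M) = 1"
    "i' \<in> I \<Longrightarrow> (\<integral>x. e i x * e i' x \<partial>M) = (if i = i' then 1 else 0)"
  using assms by (auto simp: orthonormal_family_def power2_eq_square)

lemma orthonormal_family_subset:
  "orthonormal_family M J e \<Longrightarrow> I \<subseteq> J \<Longrightarrow> orthonormal_family M I e"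
  unfolding orthonormal_family_def by blast

lemma bessel_inequality:
  assumes I: "finite I" and e: "orthonormal_family M I e" and g: "square_integrable M g"
  shows "(\<Sum>i\<in>I. (\<integral>x. g x * e i x \<partial>M)\<^sup>2) \<le> (\<integral>x. (g x)\<^sup>2 \<partial>M)"
proof -
  define c where "c i = (\<integral>x. g x * e i x \<partial>M)" for i
  define s where "s x = (\<Sum>i\<in>I. c i * e i x)" for x
  note e_sq = orthonormal_familyD(1)[OF e]
  have s: "square_integrable M s"
    unfolding s_def using I e_sq by (intro square_integrable_sum square_integrable_cmult)
  have expansion: "AE x in M. s x = (\<Sum>i\<in>I. c i * e i x)"
    by (simp add: s_def)
  have gs: "(\<integral>x. g x * s x \<partial>M) = (\<Sum>i\<in>I. (c i)\<^sup>2)"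
    using integral_mult_finite_expansion[OF I expansion square_integrableD(1)[OF s] g e_sq]
    by (simp add: c_def power2_eq_square)
  have "(\<integral>x. e i x * s x \<partial>M) = c i" if "i \<in> I" for i
    using integral_mult_finite_expansion[OF I expansion square_integrableD(1)[OF s] e_sq[OF that] e_sq]
      orthonormal_familyD(3)[OF e that] that I
    by (simp add: if_distrib cong: if_cong)
  then have ss: "(\<integral>x. s x * s x \<partial>M) = (\<Sum>i\<in>I. (c i)\<^sup>2)"
    using integral_mult_finite_expansion[OF I expansion square_integrableD(1)[OF s] s e_sq]
    by (simp add: power2_eq_square mult.commute)
  have "0 \<le> (\<integral>x. (g x - s x)\<^sup>2 \<partial>M)"
    by simp
  also have "\<dots> = (\<integral>x. (g x)\<^sup>2 - 2 * (g x * s x) + s x * s x \<partial>M)"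
    by (simp add: power2_eq_square algebra_simps)
  also have "\<dots> = (\<integral>x. (g x)\<^sup>2 \<partial>M) - 2 * (\<integral>x. g x * s x \<partial>M) + (\<integral>x. s x * s x \<partial>M)"
    using g s integrable_mult_square_integrable[OF g s] integrable_mult_square_integrable[OF s s]
    by (simp add: square_integrable_def)
  finally show ?thesis
    using gs ss by (simp add: c_def)
qed

lemma card_le_if_parseval:
  assumes I: "finite I" and K: "finite K"
    and u: "orthonormal_family M I u" and w: "orthonormal_family M K w"
    and parseval: "\<And>j. j \<in> K \<Longrightarrow> (\<Sum>i\<in>I. (\<integral>x. w j x * u i x \<partial>M)\<^sup>2) = 1"
  shows "card K \<le> card I"
proof -
  have "real (card K) = (\<Sum>j\<in>K. \<Sum>i\<in>I. (\<integral>x. w j x * u i x \<partial>M)\<^sup>2)"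
    using parseval by simp
  also have "\<dots> = (\<Sum>i\<in>I. \<Sum>j\<in>K. (\<integral>x. u i x * w j x \<partial>M)\<^sup>2)"
    by (subst sum.swap) (simp add: mult.commute)
  also have "\<dots> \<le> (\<Sum>i\<in>I. (\<integral>x. (u i x)\<^sup>2 \<partial>M))"
    using orthonormal_familyD(1)[OF u] by (intro sum_mono bessel_inequality[OF K w])
  also have "\<dots> = real (card I)"
    using orthonormal_familyD(2)[OF u] by simp
  finally show ?thesis by simp
qed

lemma bessel_inequality_finite:
  fixes r :: "'i \<Rightarrow> 'j \<Rightarrow> real"
  assumes I: "finite I" and K: "finite K"
    and orthonormal: "\<And>i i'. i \<in> I \<Longrightarrow> i' \<in> I \<Longrightarrow> (\<Sum>j\<in>K. r i j * r i' j) = (if i = i' then 1 else 0)"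
  shows "(\<Sum>i\<in>I. (\<Sum>j\<in>K. y j * r i j)\<^sup>2) \<le> (\<Sum>j\<in>K. (y j)\<^sup>2)"
proof -
  have sq: "square_integrable (count_space K) g" for g :: "'j \<Rightarrow> real"
    using K by (auto simp: square_integrable_def intro: integrable_count_space)
  have "orthonormal_family (count_space K) I r"
    using sq orthonormal K by (simp add: orthonormal_family_def lebesgue_integral_count_space_finite)
  from bessel_inequality[OF I this sq] show ?thesis
    using K by (simp add: lebesgue_integral_count_space_finite)
qed

lemma parseval_if_finite_expansion:
  assumes K: "finite K" and w: "orthonormal_family M K w" and h: "square_integrable M h"
    and expansion: "AE x in M. h x = (\<Sum>j\<in>K. (\<integral>y. h y * w j y \<partial>M) * w j x)"
  shows "(\<Sum>j\<in>K. (\<integral>x. h x * w j x \<partial>M)\<^sup>2) = (\<integral>x. (h x)\<^sup>2 \<partial>M)"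
  using integral_mult_finite_expansion[OF K expansion square_integrableD(1)[OF h] h
      orthonormal_familyD(1)[OF w]]
  by (simp add: power2_eq_square)

lemma integral_mult_projection_residual:
  assumes I: "finite I" and e: "orthonormal_family M I e"
    and g: "square_integrable M g" and w: "square_integrable M w"
  shows "(\<integral>x. w x * (g x - (\<Sum>i\<in>I. (\<integral>y. g y * e i y \<partial>M) * e i x)) \<partial>M) =
    (\<integral>x. w x * g x \<partial>M) - (\<Sum>i\<in>I. (\<integral>y. g y * e i y \<partial>M) * (\<integral>x. w x * e i x \<partial>M))"
proof -
  define s where "s x = (\<Sum>i\<in>I. (\<integral>y. g y * e i y \<partial>M) * e i x)" for x
  have s: "square_integrable M s"
    unfolding s_def using I orthonormal_familyD(1)[OF e]
    by (intro square_integrable_sum square_integrable_cmult)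
  have "(\<integral>x. w x * (g x - s x) \<partial>M) = (\<integral>x. w x * g x \<partial>M) - (\<integral>x. w x * s x \<partial>M)"
    using integrable_mult_square_integrable[OF w g] integrable_mult_square_integrable[OF w s]
    by (simp add: right_diff_distrib)
  also have "(\<integral>x. w x * s x \<partial>M) = (\<Sum>i\<in>I. (\<integral>y. g y * e i y \<partial>M) * (\<integral>x. w x * e i x \<partial>M))"
    using integral_mult_finite_expansion[OF I _ square_integrableD(1)[OF s] w orthonormal_familyD(1)[OF e]]
    by (simp add: s_def)
  finally show ?thesis
    by (simp add: s_def)
qed

section \<open>Dot-product kernels with a Mercer expansion in spherical harmonics\<close>

text \<open>The number \<open>d\<close> enters only through the multiplicities \<open>harm_dim d n\<close>: the argument
  never uses \<open>d = CARD('n) - 1\<close>.\<close>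

locale sphere_mercer_kernel =
  fixes f :: "real \<Rightarrow> real" and \<mu> :: "nat \<Rightarrow> real" and Y :: "nat \<Rightarrow> nat \<Rightarrow> real^'n \<Rightarrow> real"
    and d :: nat
  assumes d_pos: "d \<ge> 1"
    and Y_continuous: "\<And>n l. l < harm_dim d n \<Longrightarrow> continuous_on (sphere 0 1) (Y n l)"
    and Y_orthonormal: "\<And>n l n' l'. l < harm_dim d n \<Longrightarrow> l' < harm_dim d n' \<Longrightarrow>
      (\<integral>x. Y n l x * Y n' l' x \<partial>sphere_measure) = (if n = n' \<and> l = l' then 1 else 0)"
    and Y_complete: "\<And>g. g \<in> borel_measurable sphere_measure \<Longrightarrow>
      integrable sphere_measure (\<lambda>x. (g x)\<^sup>2) \<Longrightarrow>
      (\<forall>n l. l < harm_dim d n \<longrightarrow> (\<integral>x. g x * Y n l x \<partial>sphere_measure) = 0) \<Longrightarrow>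
      AE x in sphere_measure. g x = 0"
    and mercer: "\<And>x y. x \<in> sphere 0 1 \<Longrightarrow> y \<in> sphere 0 1 \<Longrightarrow>
      (\<lambda>n. \<mu> n * (\<Sum>l<harm_dim d n. Y n l x * Y n l y)) sums f (x \<bullet> y)"
    and mu_nonneg: "\<And>n. \<mu> n \<ge> 0"
begin

abbreviation \<sigma> :: "(real^'n) measure" where "\<sigma> \<equiv> sphere_measure"
abbreviation a :: "nat \<Rightarrow> nat" where "a n \<equiv> harm_dim d n"

lemma Y_measurable: "l < a n \<Longrightarrow> Y n l \<in> borel_measurable \<sigma>"
  by (rule borel_measurable_sphere_measure_if_continuous[OF Y_continuous])

lemma Y_bounded:
  assumes "l < a n"
  obtains B where "\<And>x. x \<in> sphere 0 1 \<Longrightarrow> \<bar>Y n l x\<bar> \<le> B"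
proof -
  have "compact (Y n l ` sphere 0 1)"
    by (rule compact_continuous_image[OF Y_continuous[OF assms]]) simp
  then have "bounded (Y n l ` sphere 0 1)"
    by (rule compact_imp_bounded)
  then obtain B where "\<forall>x\<in>sphere 0 1. \<bar>Y n l x\<bar> \<le> B"
    unfolding bounded_iff by auto
  then show ?thesis
    using that by blast
qed

lemma Y_square_integrable:
  assumes "l < a n"
  shows "square_integrable \<sigma> (Y n l)"
proof -
  obtain B where B: "\<And>x. x \<in> sphere 0 1 \<Longrightarrow> \<bar>Y n l x\<bar> \<le> B"
    using Y_bounded[OF assms] by blast
  show ?thesis
    by (rule finite_measure.square_integrable_bounded[OF finite_measure_sphere_measure
          Y_measurable[OF assms]]) (use B in simp)
qed

lemma integrable_Y: "l < a n \<Longrightarrow> integrable \<sigma> (Y n l)"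
  by (rule finite_measure.integrable_square_integrable[OF finite_measure_sphere_measure Y_square_integrable])

lemma integrable_Y_mult:
  assumes l: "l < a n" and g: "integrable \<sigma> g"
  shows "integrable \<sigma> (\<lambda>y. Y n l y * g y)"
proof -
  obtain B where B: "\<And>x. x \<in> sphere 0 1 \<Longrightarrow> \<bar>Y n l x\<bar> \<le> B"
    using Y_bounded[OF l] by blast
  show ?thesis
  proof (rule Bochner_Integration.integrable_bound)
    show "integrable \<sigma> (\<lambda>y. B * \<bar>g y\<bar>)"
      using g by simp
    have "\<bar>Y n l x\<bar> * \<bar>g x\<bar> \<le> \<bar>B\<bar> * \<bar>g x\<bar>" if "x \<in> sphere 0 1" for x
      using B[OF that] by (intro mult_right_mono) auto
    then show "AE x in \<sigma>. norm (Y n l x * g x) \<le> norm (B * \<bar>g x\<bar>)"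
      by (intro AE_I2) (simp add: abs_mult del: mem_sphere)
  qed (use Y_measurable[OF l] g in measurable)
qed

definition mercer_partial_sum :: "nat \<Rightarrow> real^'n \<Rightarrow> real^'n \<Rightarrow> real" where
  "mercer_partial_sum N x y = (\<Sum>n<N. \<mu> n * (\<Sum>l<a n. Y n l x * Y n l y))"

lemma mercer_partial_sum_tendsto:
  "x \<in> sphere 0 1 \<Longrightarrow> y \<in> sphere 0 1 \<Longrightarrow> (\<lambda>N. mercer_partial_sum N x y) \<longlonglongrightarrow> f (x \<bullet> y)"
  using mercer unfolding sums_def mercer_partial_sum_def by blast

lemma mercer_partial_sum_diag:
  assumes x: "x \<in> sphere 0 1"
  shows "0 \<le> mercer_partial_sum N x x" "mercer_partial_sum N x x \<le> f 1"
proof -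
  have "x \<bullet> x = 1"
    using x by (simp add: power2_norm_eq_inner[symmetric])
  then have diag: "(\<lambda>n. \<mu> n * (\<Sum>l<a n. Y n l x * Y n l x)) sums f 1"
    using mercer[OF x x] by simp
  have nonneg: "0 \<le> \<mu> n * (\<Sum>l<a n. Y n l x * Y n l x)" for n
    using mu_nonneg by (simp add: sum_nonneg)
  show "0 \<le> mercer_partial_sum N x x"
    unfolding mercer_partial_sum_def using nonneg by (simp add: sum_nonneg)
  show "mercer_partial_sum N x x \<le> f 1"
    unfolding mercer_partial_sum_def
    using sum_le_suminf[OF sums_summable[OF diag], of "{..<N}"] nonneg sums_unique[OF diag] by simp
qed

lemma f_1_nonneg: "f 1 \<ge> 0"
proof -
  obtain x :: "real^'n" where "norm x = 1"
    using vector_choose_size zero_le_one by blast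
  then show ?thesis
    using mercer_partial_sum_diag[of x 0] by simp
qed

text \<open>A Cauchy--Schwarz bound, via \<open>\<bar>u v\<bar> \<le> (u\<^sup>2 + v\<^sup>2) / 2\<close> termwise.\<close>

lemma mercer_partial_sum_bound:
  assumes x: "x \<in> sphere 0 1" and y: "y \<in> sphere 0 1"
  shows "\<bar>mercer_partial_sum N x y\<bar> \<le> f 1"
proof -
  have "\<bar>mercer_partial_sum N x y\<bar> \<le> (\<Sum>n<N. \<mu> n * (\<Sum>l<a n. \<bar>Y n l x * Y n l y\<bar>))"
    unfolding mercer_partial_sum_def
    using mu_nonneg by (auto intro!: order.trans[OF sum_abs] sum_mono mult_left_mono sum_abs
        simp: abs_mult simp del: abs_mult_self_eq)
  also have "\<dots> \<le> (\<Sum>n<N. \<mu> n * (\<Sum>l<a n. ((Y n l x)\<^sup>2 + (Y n l y)\<^sup>2) / 2))"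
    using mu_nonneg abs_mult_le_half_sum_squares by (intro sum_mono mult_left_mono) auto
  also have "\<dots> = (mercer_partial_sum N x x + mercer_partial_sum N y y) / 2"
    unfolding mercer_partial_sum_def
    by (simp add: sum_divide_distrib[symmetric] sum.distrib power2_eq_square distrib_left add_divide_distrib)
  also have "\<dots> \<le> f 1"
    using mercer_partial_sum_diag[OF x, of N] mercer_partial_sum_diag[OF y, of N] by simp
  finally show ?thesis .
qed

lemma mercer_partial_sum_measurable: "(\<lambda>y. mercer_partial_sum N x y) \<in> borel_measurable \<sigma>"
  unfolding mercer_partial_sum_def using Y_measurable
  by (auto intro!: borel_measurable_sum borel_measurable_times)

lemma kernel_measurable: "x \<in> sphere 0 1 \<Longrightarrow> (\<lambda>y. f (x \<bullet> y)) \<in> borel_measurable \<sigma>"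
  by (rule borel_measurable_LIMSEQ_real[where u="\<lambda>N y. mercer_partial_sum N x y"])
    (auto intro: mercer_partial_sum_tendsto mercer_partial_sum_measurable)

definition kernel_op :: "(real^'n \<Rightarrow> real) \<Rightarrow> real^'n \<Rightarrow> real" where
  "kernel_op g x = (\<integral>y. f (x \<bullet> y) * g y \<partial>\<sigma>)"

definition harm_coeff :: "(real^'n \<Rightarrow> real) \<Rightarrow> nat \<Rightarrow> nat \<Rightarrow> real" where
  "harm_coeff g n l = (\<integral>y. Y n l y * g y \<partial>\<sigma>)"

definition kernel_op_partial :: "(real^'n \<Rightarrow> real) \<Rightarrow> nat \<Rightarrow> real^'n \<Rightarrow> real" where
  "kernel_op_partial g N x = (\<Sum>n<N. \<mu> n * (\<Sum>l<a n. Y n l x * harm_coeff g n l))"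

lemma kernel_op_partial_measurable: "kernel_op_partial g N \<in> borel_measurable \<sigma>"
  unfolding kernel_op_partial_def using Y_measurable
  by (auto intro!: borel_measurable_sum borel_measurable_times)

lemma integral_mercer_partial_sum:
  assumes g: "integrable \<sigma> g"
  shows "(\<integral>y. mercer_partial_sum N x y * g y \<partial>\<sigma>) = kernel_op_partial g N x"
proof -
  have expand: "(\<lambda>y. mercer_partial_sum N x y * g y) =
      (\<lambda>y. \<Sum>n<N. \<Sum>l<a n. (\<mu> n * Y n l x) * (Y n l y * g y))"
    by (auto simp: mercer_partial_sum_def sum_distrib_left sum_distrib_right algebra_simps)
  have "integrable \<sigma> (\<lambda>y. (\<mu> n * Y n l x) * (Y n l y * g y))" if "l < a n" for n l
    using integrable_Y_mult[OF that g] by simp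
  then have "(\<integral>y. mercer_partial_sum N x y * g y \<partial>\<sigma>) =
      (\<Sum>n<N. \<Sum>l<a n. (\<mu> n * Y n l x) * harm_coeff g n l)"
    unfolding expand harm_coeff_def by (subst integral_sum_sum) simp_all
  then show ?thesis
    by (simp add: kernel_op_partial_def sum_distrib_left mult.assoc)
qed

lemma mercer_partial_sum_mult_bound:
  "x \<in> sphere 0 1 \<Longrightarrow> y \<in> sphere 0 1 \<Longrightarrow> \<bar>mercer_partial_sum N x y * g y\<bar> \<le> f 1 * \<bar>g y\<bar>"
  using mercer_partial_sum_bound[of x y N] by (simp add: abs_mult mult_right_mono del: mem_sphere)

lemma integrable_mercer_partial_sum_mult:
  assumes x: "x \<in> sphere 0 1" and g: "integrable \<sigma> g"
  shows "integrable \<sigma> (\<lambda>y. mercer_partial_sum N x y * g y)"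
proof (rule Bochner_Integration.integrable_bound)
  show "AE y in \<sigma>. norm (mercer_partial_sum N x y * g y) \<le> norm (f 1 * \<bar>g y\<bar>)"
    using mercer_partial_sum_mult_bound[OF x] f_1_nonneg
    by (intro AE_I2) (simp add: abs_mult del: mem_sphere)
qed (use g mercer_partial_sum_measurable in auto)

lemma kernel_op_partial_bound:
  assumes x: "x \<in> sphere 0 1" and g: "integrable \<sigma> g"
  shows "\<bar>kernel_op_partial g N x\<bar> \<le> f 1 * (\<integral>y. \<bar>g y\<bar> \<partial>\<sigma>)"
proof -
  have "\<bar>kernel_op_partial g N x\<bar> = \<bar>\<integral>y. mercer_partial_sum N x y * g y \<partial>\<sigma>\<bar>"
    by (simp add: integral_mercer_partial_sum[OF g])
  also have "\<dots> \<le> (\<integral>y. f 1 * \<bar>g y\<bar> \<partial>\<sigma>)"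
    using integrable_mercer_partial_sum_mult[OF x g] g mercer_partial_sum_mult_bound[OF x]
    by (intro integral_abs_bound_integral) simp_all
  finally show ?thesis by simp
qed

lemma kernel_op_partial_tendsto:
  assumes x: "x \<in> sphere 0 1" and g: "integrable \<sigma> g"
  shows "(\<lambda>N. kernel_op_partial g N x) \<longlonglongrightarrow> kernel_op g x"
proof -
  have "(\<lambda>N. \<integral>y. mercer_partial_sum N x y * g y \<partial>\<sigma>) \<longlonglongrightarrow> (\<integral>y. f (x \<bullet> y) * g y \<partial>\<sigma>)"
  proof (rule integral_dominated_convergence[where w="\<lambda>y. f 1 * \<bar>g y\<bar>"])
    show "AE y in \<sigma>. (\<lambda>N. mercer_partial_sum N x y * g y) \<longlonglongrightarrow> f (x \<bullet> y) * g y"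
      using mercer_partial_sum_tendsto[OF x] by (intro AE_I2 tendsto_mult_right) simp
    show "AE y in \<sigma>. norm (mercer_partial_sum N x y * g y) \<le> f 1 * \<bar>g y\<bar>" for N
      using mercer_partial_sum_mult_bound[OF x] by (intro AE_I2) (simp del: mem_sphere)
    show "(\<lambda>y. f (x \<bullet> y) * g y) \<in> borel_measurable \<sigma>"
      using kernel_measurable[OF x] g by measurable
    show "(\<lambda>y. mercer_partial_sum N x y * g y) \<in> borel_measurable \<sigma>" for N
      using mercer_partial_sum_measurable g by measurable
  qed (use g in simp)
  then show ?thesis
    by (simp add: integral_mercer_partial_sum[OF g] kernel_op_def)
qed

lemma kernel_op_measurable: "integrable \<sigma> g \<Longrightarrow> kernel_op g \<in> borel_measurable \<sigma>"
  by (rule borel_measurable_LIMSEQ_real[where u="kernel_op_partial g"])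
    (auto intro: kernel_op_partial_tendsto kernel_op_partial_measurable)

lemma mercer_sum_orthonormal:
  assumes l0: "l0 < a n0"
  shows "(\<Sum>n<N. \<mu> n * (\<Sum>l<a n. c n l * (\<integral>x. Y n l x * Y n0 l0 x \<partial>\<sigma>))) =
    (if n0 < N then \<mu> n0 * c n0 l0 else 0)"
proof -
  have "(\<Sum>l<a n. c n l * (\<integral>x. Y n l x * Y n0 l0 x \<partial>\<sigma>)) = (if n = n0 then c n0 l0 else 0)" for n
  proof -
    have "(\<Sum>l<a n. c n l * (\<integral>x. Y n l x * Y n0 l0 x \<partial>\<sigma>)) =
        (\<Sum>l<a n. if n = n0 \<and> l = l0 then c n l else 0)"
      using Y_orthonormal l0 by (intro sum.cong) auto
    then show ?thesis
      using l0 by (cases "n = n0") (auto simp: sum.delta)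
  qed
  then show ?thesis
    by (simp add: if_distrib[of "\<lambda>z. \<mu> _ * z"] sum.delta cong: if_cong)
qed

lemma kernel_op_Y:
  assumes l: "l < a n" and x: "x \<in> sphere 0 1"
  shows "kernel_op (Y n l) x = \<mu> n * Y n l x"
proof -
  have partial: "kernel_op_partial (Y n l) N x = (if n < N then \<mu> n * Y n l x else 0)" for N
    unfolding kernel_op_partial_def harm_coeff_def by (rule mercer_sum_orthonormal[OF l])
  have "\<forall>\<^sub>F N in sequentially. kernel_op_partial (Y n l) N x = \<mu> n * Y n l x"
    using eventually_gt_at_top[of n] by eventually_elim (simp add: partial)
  then have "(\<lambda>N. kernel_op_partial (Y n l) N x) \<longlonglongrightarrow> \<mu> n * Y n l x"
    by (rule tendsto_eventually)
  with kernel_op_partial_tendsto[OF x integrable_Y[OF l]] show ?thesis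
    by (rule LIMSEQ_unique)
qed

lemma integral_kernel_op_partial_mult_Y:
  assumes l0: "l0 < a n0"
  shows "(\<integral>x. kernel_op_partial g N x * Y n0 l0 x \<partial>\<sigma>) = (if n0 < N then \<mu> n0 * harm_coeff g n0 l0 else 0)"
proof -
  have expand: "(\<lambda>x. kernel_op_partial g N x * Y n0 l0 x) =
      (\<lambda>x. \<Sum>n<N. \<Sum>l<a n. (\<mu> n * harm_coeff g n l) * (Y n l x * Y n0 l0 x))"
    by (auto simp: kernel_op_partial_def sum_distrib_left sum_distrib_right algebra_simps)
  have "integrable \<sigma> (\<lambda>x. (\<mu> n * harm_coeff g n l) * (Y n l x * Y n0 l0 x))" if "l < a n" for n l
    using integrable_mult_square_integrable[OF Y_square_integrable[OF that] Y_square_integrable[OF l0]]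
    by simp
  then have "(\<integral>x. kernel_op_partial g N x * Y n0 l0 x \<partial>\<sigma>) =
      (\<Sum>n<N. \<Sum>l<a n. (\<mu> n * harm_coeff g n l) * (\<integral>x. Y n l x * Y n0 l0 x \<partial>\<sigma>))"
    unfolding expand by (subst integral_sum_sum) simp_all
  also have "\<dots> = (\<Sum>n<N. \<mu> n * (\<Sum>l<a n. harm_coeff g n l * (\<integral>x. Y n l x * Y n0 l0 x \<partial>\<sigma>)))"
    by (simp add: sum_distrib_left mult.assoc)
  finally show ?thesis
    using mercer_sum_orthonormal[OF l0] by simp
qed

lemma integral_kernel_op_mult_Y:
  assumes l0: "l0 < a n0" and g: "integrable \<sigma> g"
  shows "(\<integral>x. kernel_op g x * Y n0 l0 x \<partial>\<sigma>) = \<mu> n0 * harm_coeff g n0 l0"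
proof -
  define A where "A = f 1 * (\<integral>y. \<bar>g y\<bar> \<partial>\<sigma>)"
  have "(\<lambda>N. \<integral>x. kernel_op_partial g N x * Y n0 l0 x \<partial>\<sigma>) \<longlonglongrightarrow> (\<integral>x. kernel_op g x * Y n0 l0 x \<partial>\<sigma>)"
  proof (rule integral_dominated_convergence[where w="\<lambda>x. A * \<bar>Y n0 l0 x\<bar>"])
    show "AE x in \<sigma>. (\<lambda>N. kernel_op_partial g N x * Y n0 l0 x) \<longlonglongrightarrow> kernel_op g x * Y n0 l0 x"
      using kernel_op_partial_tendsto[OF _ g] by (intro AE_I2 tendsto_mult_right) simp
    show "AE x in \<sigma>. norm (kernel_op_partial g N x * Y n0 l0 x) \<le> A * \<bar>Y n0 l0 x\<bar>" for N
      using kernel_op_partial_bound[OF _ g]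
      by (intro AE_I2) (auto simp: abs_mult A_def intro!: mult_right_mono)
    show "(\<lambda>x. kernel_op g x * Y n0 l0 x) \<in> borel_measurable \<sigma>"
      using kernel_op_measurable[OF g] Y_measurable[OF l0] by measurable
    show "(\<lambda>x. kernel_op_partial g N x * Y n0 l0 x) \<in> borel_measurable \<sigma>" for N
      using kernel_op_partial_measurable Y_measurable[OF l0] by measurable
  qed (use integrable_Y[OF l0] in simp)
  moreover have "\<forall>\<^sub>F N in sequentially. (\<integral>x. kernel_op_partial g N x * Y n0 l0 x \<partial>\<sigma>) = \<mu> n0 * harm_coeff g n0 l0"
    using eventually_gt_at_top[of n0] by eventually_elim (simp add: integral_kernel_op_partial_mult_Y[OF l0])
  then have "(\<lambda>N. \<integral>x. kernel_op_partial g N x * Y n0 l0 x \<partial>\<sigma>) \<longlonglongrightarrow> \<mu> n0 * harm_coeff g n0 l0"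
    by (rule tendsto_eventually)
  ultimately show ?thesis
    by (rule LIMSEQ_unique)
qed

lemma harm_coeff_eigenfunction:
  assumes g: "integrable \<sigma> g" and eigen: "AE x in \<sigma>. kernel_op g x = v * g x"
    and l: "l < a n" and ne: "\<mu> n \<noteq> v"
  shows "harm_coeff g n l = 0"
proof -
  have "(\<integral>x. kernel_op g x * Y n l x \<partial>\<sigma>) = (\<integral>x. v * (Y n l x * g x) \<partial>\<sigma>)"
  proof (rule integral_cong_AE)
    show "AE x in \<sigma>. kernel_op g x * Y n l x = v * (Y n l x * g x)"
      using eigen by eventually_elim simp
    show "(\<lambda>x. kernel_op g x * Y n l x) \<in> borel_measurable \<sigma>"
      using kernel_op_measurable[OF g] Y_measurable[OF l] by measurable
    show "(\<lambda>x. v * (Y n l x * g x)) \<in> borel_measurable \<sigma>"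
      using Y_measurable[OF l] borel_measurable_integrable[OF g] by measurable
  qed
  then have "\<mu> n * harm_coeff g n l = v * harm_coeff g n l"
    using integral_kernel_op_mult_Y[OF l g] by (simp add: harm_coeff_def)
  then show ?thesis
    using ne by simp
qed

lemma kernel_op_eq_0_if_coeffs_vanish:
  assumes g: "integrable \<sigma> g" and x: "x \<in> sphere 0 1"
    and coeffs: "\<And>n l. l < a n \<Longrightarrow> \<mu> n \<noteq> 0 \<Longrightarrow> harm_coeff g n l = 0"
  shows "kernel_op g x = 0"
proof -
  have "kernel_op_partial g N x = 0" for N
  proof -
    have "kernel_op_partial g N x = (\<Sum>n<N. \<Sum>l<a n. (\<mu> n * harm_coeff g n l) * Y n l x)"
      by (simp add: kernel_op_partial_def sum_distrib_left mult_ac)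
    also have "\<dots> = 0"
      using coeffs by (force intro!: sum.neutral)
    finally show ?thesis .
  qed
  then have "(\<lambda>N. kernel_op_partial g N x) \<longlonglongrightarrow> 0"
    by simp
  with kernel_op_partial_tendsto[OF x g] show ?thesis
    by (rule LIMSEQ_unique)
qed

definition harm_index :: "nat set \<Rightarrow> (nat \<times> nat) set" where
  "harm_index F = (SIGMA n:F. {..<a n})"

abbreviation harm_fun :: "nat \<times> nat \<Rightarrow> real^'n \<Rightarrow> real" where
  "harm_fun j \<equiv> Y (fst j) (snd j)"

lemma finite_harm_index: "finite F \<Longrightarrow> finite (harm_index F)"
  unfolding harm_index_def by (rule finite_SigmaI) auto

lemma card_harm_index: "finite F \<Longrightarrow> card (harm_index F) = (\<Sum>n\<in>F. a n)"
  unfolding harm_index_def by (simp add: card_SigmaI)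

lemma mem_harm_index: "(n, l) \<in> harm_index F \<longleftrightarrow> n \<in> F \<and> l < a n"
  by (simp add: harm_index_def)

lemma orthonormal_harm_index: "orthonormal_family \<sigma> (harm_index F) harm_fun"
  using Y_square_integrable Y_orthonormal
  by (auto simp: orthonormal_family_def harm_index_def prod_eq_iff)

lemma harm_expansion:
  assumes F: "finite F" and h: "square_integrable \<sigma> h"
    and vanish: "\<And>n l. l < a n \<Longrightarrow> n \<notin> F \<Longrightarrow> harm_coeff h n l = 0"
  shows "AE x in \<sigma>. h x = (\<Sum>j\<in>harm_index F. harm_coeff h (fst j) (snd j) * harm_fun j x)"
proof -
  define s where "s x = (\<Sum>j\<in>harm_index F. harm_coeff h (fst j) (snd j) * harm_fun j x)" for x
  have s_expansion: "AE x in \<sigma>. s x = (\<Sum>j\<in>harm_index F. harm_coeff h (fst j) (snd j) * harm_fun j x)"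
    by (simp add: s_def)
  note Y_sq = orthonormal_familyD(1)[OF orthonormal_harm_index]
  have s: "square_integrable \<sigma> s"
    unfolding s_def using finite_harm_index[OF F] Y_sq
    by (intro square_integrable_sum square_integrable_cmult)
  have "AE x in \<sigma>. h x - s x = 0"
  proof (rule Y_complete)
    show "(\<lambda>x. h x - s x) \<in> borel_measurable \<sigma>" "integrable \<sigma> (\<lambda>x. (h x - s x)\<^sup>2)"
      using square_integrable_diff[OF h s] by (simp_all add: square_integrable_def)
    show "\<forall>n l. l < a n \<longrightarrow> (\<integral>x. (h x - s x) * Y n l x \<partial>\<sigma>) = 0"
    proof (intro allI impI)
      fix n l assume l: "l < a n"
      have "(n, l) \<in> harm_index UNIV"
        using l by (simp add: mem_harm_index)
      then have "(\<integral>x. Y n l x * s x \<partial>\<sigma>) =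
          (\<Sum>j\<in>harm_index F. harm_coeff h (fst j) (snd j) * (if (n, l) = j then 1 else 0))"
        using integral_mult_finite_expansion[OF finite_harm_index[OF F] s_expansion
            square_integrableD(1)[OF s] Y_square_integrable[OF l] Y_sq]
          orthonormal_familyD(3)[OF orthonormal_harm_index[of UNIV], of "(n, l)"]
        by (auto intro!: sum.cong simp: harm_index_def)
      also have "\<dots> = (\<Sum>j\<in>harm_index F. if j = (n, l) then harm_coeff h (fst j) (snd j) else 0)"
        by (intro sum.cong) auto
      also have "\<dots> = harm_coeff h n l"
        using finite_harm_index[OF F] l vanish[OF l] by (cases "n \<in> F") (simp_all add: mem_harm_index)
      finally have "(\<integral>x. Y n l x * s x \<partial>\<sigma>) = (\<integral>x. Y n l x * h x \<partial>\<sigma>)"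
        by (simp add: harm_coeff_def)
      moreover have "(\<integral>x. (h x - s x) * Y n l x \<partial>\<sigma>) = (\<integral>x. Y n l x * h x \<partial>\<sigma>) - (\<integral>x. Y n l x * s x \<partial>\<sigma>)"
        using integrable_mult_square_integrable[OF Y_square_integrable[OF l] h]
          integrable_mult_square_integrable[OF Y_square_integrable[OF l] s]
        by (simp add: algebra_simps)
      ultimately show "(\<integral>x. (h x - s x) * Y n l x \<partial>\<sigma>) = 0"
        by simp
    qed
  qed
  then show ?thesis
    by (simp add: s_def)
qed

text \<open>Integrating the diagonal of the Mercer expansion: the trace of the kernel operator is
  at most \<open>f 1\<close>.\<close>

lemma sum_mu_harm_dim_le: "(\<Sum>n<N. \<mu> n * a n) \<le> f 1"
proof -
  have integrable: "integrable \<sigma> (\<lambda>x. \<mu> n * (Y n l x * Y n l x))" if "l < a n" for n l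
    using integrable_mult_square_integrable[OF Y_square_integrable[OF that] Y_square_integrable[OF that]]
    by simp
  have diag: "mercer_partial_sum N x x = (\<Sum>n<N. \<Sum>l<a n. \<mu> n * (Y n l x * Y n l x))" for x
    by (simp add: mercer_partial_sum_def sum_distrib_left)
  have "(\<Sum>n<N. \<mu> n * a n) = (\<Sum>n<N. \<Sum>l<a n. \<integral>x. \<mu> n * (Y n l x * Y n l x) \<partial>\<sigma>)"
    using Y_orthonormal by (simp add: mult.commute)
  also have "\<dots> = (\<integral>x. mercer_partial_sum N x x \<partial>\<sigma>)"
    unfolding diag using integrable by (subst integral_sum_sum) simp_all
  also have "\<dots> \<le> (\<integral>x. f 1 \<partial>\<sigma>)"
    unfolding diag using integrable mercer_partial_sum_diag(2)[of _ N]
      finite_measure.integrable_const[OF finite_measure_sphere_measure]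
    by (intro integral_mono Bochner_Integration.integrable_sum) (auto simp: diag[symmetric])
  also have "\<dots> = f 1"
    using prob_space.prob_space[OF prob_space_sphere_measure[where 'n='n]] by simp
  finally show ?thesis .
qed

lemma finite_mu_superlevel:
  assumes t: "t > 0"
  shows "finite {n. t \<le> \<mu> n}"
proof (rule ccontr)
  have bound: "real (card B) * t \<le> f 1" if B: "finite B" "B \<subseteq> {n. t \<le> \<mu> n}" for B
  proof -
    obtain N where N: "B \<subseteq> {..<N}"
      using finite_nat_bounded[OF B(1)] by blast
    have "real (card B) * t = (\<Sum>n\<in>B. t)"
      by simp
    also have "\<dots> \<le> (\<Sum>n\<in>B. \<mu> n * a n)"
    proof (rule sum_mono)
      fix n assume "n \<in> B"
      then have "t \<le> \<mu> n * 1"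
        using B by auto
      also have "\<dots> \<le> \<mu> n * a n"
        using harm_dim_pos[OF d_pos] mu_nonneg by (intro mult_left_mono) auto
      finally show "t \<le> \<mu> n * a n" .
    qed
    also have "\<dots> \<le> (\<Sum>n<N. \<mu> n * a n)"
      using N mu_nonneg by (intro sum_mono2) auto
    also have "\<dots> \<le> f 1"
      by (rule sum_mu_harm_dim_le)
    finally show ?thesis .
  qed
  assume "infinite {n. t \<le> \<mu> n}"
  then obtain B where "finite B" "card B = nat \<lceil>f 1 / t\<rceil> + 1" "B \<subseteq> {n. t \<le> \<mu> n}"
    using infinite_arbitrarily_large by blast
  with bound have "real (nat \<lceil>f 1 / t\<rceil> + 1) * t \<le> f 1"
    by metis
  moreover have "f 1 / t \<le> real (nat \<lceil>f 1 / t\<rceil>)"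
    by linarith
  ultimately show False
    using t by (simp add: field_simps)
qed

end

section \<open>The spectrum of the kernel operator\<close>

context sphere_mercer_kernel
begin

lemma eigenfunction_harm_expansion:
  assumes F: "finite F" and outside: "\<And>n. n \<notin> F \<Longrightarrow> \<mu> n \<noteq> v"
    and h: "square_integrable \<sigma> h" and eigen: "AE x in \<sigma>. kernel_op h x = v * h x"
  shows "AE x in \<sigma>. h x = (\<Sum>j\<in>harm_index F. harm_coeff h (fst j) (snd j) * harm_fun j x)"
  using finite_measure.integrable_square_integrable[OF finite_measure_sphere_measure h]
  by (intro harm_expansion[OF F h] harm_coeff_eigenfunction[OF _ eigen _ outside])

lemma finite_mu_level: "v > 0 \<Longrightarrow> finite {n. \<mu> n = v}"
  using finite_mu_superlevel by (rule finite_subset[rotated]) auto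

context
  fixes lam :: "nat \<Rightarrow> real" and e :: "nat \<Rightarrow> real^'n \<Rightarrow> real"
  assumes spectral: "spectral_system \<sigma> (\<lambda>x y. f (x \<bullet> y)) lam e"
begin

lemma spectral_orthonormal: "orthonormal_family \<sigma> UNIV e"
  using spectral by (simp add: spectral_system_def orthonormal_family_def square_integrable_def)

lemma spectral_square_integrable: "square_integrable \<sigma> (e i)"
  using orthonormal_familyD(1)[OF spectral_orthonormal] by simp

lemma spectral_antimono: "antimono lam"
  and spectral_pos: "lam i > 0"
  and spectral_eigen: "AE x in \<sigma>. kernel_op (e i) x = lam i * e i x"
  using spectral by (simp_all add: spectral_system_def kernel_op_def)

lemma spectral_complete:
  "square_integrable \<sigma> g \<Longrightarrow> (\<And>i. (\<integral>x. g x * e i x \<partial>\<sigma>) = 0) \<Longrightarrow> AE x in \<sigma>. kernel_op g x = 0"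
  using spectral unfolding spectral_system_def kernel_op_def square_integrable_def by blast

lemma harm_coeff_spectral: "l < a n \<Longrightarrow> \<mu> n \<noteq> lam i \<Longrightarrow> harm_coeff (e i) n l = 0"
  using finite_measure.integrable_square_integrable[OF finite_measure_sphere_measure spectral_square_integrable]
  by (rule harm_coeff_eigenfunction[OF _ spectral_eigen])

lemma spectral_expansion:
  assumes "finite F" "\<And>n. n \<notin> F \<Longrightarrow> \<mu> n \<noteq> lam i"
  shows "AE x in \<sigma>. e i x = (\<Sum>j\<in>harm_index F. harm_coeff (e i) (fst j) (snd j) * harm_fun j x)"
  by (rule eigenfunction_harm_expansion[OF assms spectral_square_integrable spectral_eigen])

lemma card_spectral_superlevel_le:
  assumes t: "t > 0" and I: "finite I" "I \<subseteq> {i. t \<le> lam i}"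
  shows "card I \<le> card (harm_index {n. t \<le> \<mu> n})"
proof (rule card_le_if_parseval[OF finite_harm_index[OF finite_mu_superlevel[OF t]] I(1)
      orthonormal_harm_index])
  show "orthonormal_family \<sigma> I e"
    by (rule orthonormal_family_subset[OF spectral_orthonormal]) simp
  fix i assume "i \<in> I"
  then have "\<mu> n \<noteq> lam i" if "n \<notin> {n. t \<le> \<mu> n}" for n
    using I(2) that by auto
  from spectral_expansion[OF finite_mu_superlevel[OF t] this]
  have "AE x in \<sigma>. e i x = (\<Sum>j\<in>harm_index {n. t \<le> \<mu> n}. (\<integral>y. e i y * harm_fun j y \<partial>\<sigma>) * harm_fun j x)"
    by (simp add: harm_coeff_def mult.commute)
  from parseval_if_finite_expansion[OF finite_harm_index[OF finite_mu_superlevel[OF t]]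
      orthonormal_harm_index spectral_square_integrable this]
  show "(\<Sum>j\<in>harm_index {n. t \<le> \<mu> n}. (\<integral>x. e i x * harm_fun j x \<partial>\<sigma>)\<^sup>2) = 1"
    using orthonormal_familyD(2)[OF spectral_orthonormal] by simp
qed

lemma finite_spectral_superlevel:
  assumes t: "t > 0"
  shows "finite {i. t \<le> lam i}"
proof (rule ccontr)
  assume "infinite {i. t \<le> lam i}"
  then obtain I where "finite I" "card I = Suc (card (harm_index {n. t \<le> \<mu> n}))" "I \<subseteq> {i. t \<le> lam i}"
    using infinite_arbitrarily_large by blast
  then show False
    using card_spectral_superlevel_le[OF t] by fastforce
qed

text \<open>The residual of the projection of \<open>Y n l\<close> onto the \<open>e i\<close> with \<open>t \<le> lam i\<close> is
  orthogonal to all \<open>e i\<close>, hence annihilated by the kernel operator, hence (as \<open>\<mu> n > 0\<close>)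
  orthogonal to \<open>Y n l\<close> itself.\<close>

lemma parseval_Y_spectral_superlevel:
  assumes t: "t > 0" and l: "l < a n" and tn: "t \<le> \<mu> n"
  shows "(\<Sum>i\<in>{i. t \<le> lam i}. (\<integral>x. Y n l x * e i x \<partial>\<sigma>)\<^sup>2) = 1"
proof -
  define It where "It = {i. t \<le> lam i}"
  define c where "c i = (\<integral>x. Y n l x * e i x \<partial>\<sigma>)" for i
  define h where "h x = Y n l x - (\<Sum>i\<in>It. c i * e i x)" for x
  have It: "finite It"
    unfolding It_def by (rule finite_spectral_superlevel[OF t])
  have e: "orthonormal_family \<sigma> It e"
    by (rule orthonormal_family_subset[OF spectral_orthonormal]) simp
  have h: "square_integrable \<sigma> h"
    unfolding h_def using It spectral_square_integrable Y_square_integrable[OF l]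
    by (intro square_integrable_diff square_integrable_sum square_integrable_cmult)
  have residual: "(\<integral>x. w x * h x \<partial>\<sigma>) = (\<integral>x. w x * Y n l x \<partial>\<sigma>) - (\<Sum>i\<in>It. c i * (\<integral>x. w x * e i x \<partial>\<sigma>))"
    if "square_integrable \<sigma> w" for w
    using integral_mult_projection_residual[OF It e Y_square_integrable[OF l] that]
    by (simp add: h_def c_def)
  have "(\<integral>x. h x * e k x \<partial>\<sigma>) = 0" for k
  proof -
    have "(\<integral>x. h x * e k x \<partial>\<sigma>) = c k - (\<Sum>i\<in>It. if k = i then c i else 0)"
      using residual[OF spectral_square_integrable] orthonormal_familyD(3)[OF spectral_orthonormal]
      by (simp add: mult.commute c_def if_distrib cong: if_cong)
    moreover have "c k = 0" if "k \<notin> It"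
      using harm_coeff_spectral[OF l, of k] that tn by (force simp: It_def c_def harm_coeff_def mult.commute)
    ultimately show ?thesis
      using It by (simp add: sum.delta')
  qed
  then have "AE x in \<sigma>. kernel_op h x = 0"
    by (rule spectral_complete[OF h])
  then have "(\<integral>x. kernel_op h x * Y n l x \<partial>\<sigma>) = 0"
    by (intro integral_eq_zero_AE) (auto elim: AE_mp)
  then have "harm_coeff h n l = 0"
    using integral_kernel_op_mult_Y[OF l finite_measure.integrable_square_integrable[OF
          finite_measure_sphere_measure h]] t tn by simp
  moreover have "harm_coeff h n l = 1 - (\<Sum>i\<in>It. (c i)\<^sup>2)"
    using residual[OF Y_square_integrable[OF l]] Y_orthonormal[OF l l]
    by (simp add: harm_coeff_def c_def power2_eq_square)
  ultimately show ?thesis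
    by (simp add: It_def c_def)
qed

theorem card_spectral_superlevel:
  assumes t: "t > 0"
  shows "card {i. t \<le> lam i} = (\<Sum>n | t \<le> \<mu> n. a n)"
proof (rule antisym)
  show "card {i. t \<le> lam i} \<le> (\<Sum>n | t \<le> \<mu> n. a n)"
    using card_spectral_superlevel_le[OF t finite_spectral_superlevel[OF t]]
    by (simp add: card_harm_index[OF finite_mu_superlevel[OF t]])
  have "card (harm_index {n. t \<le> \<mu> n}) \<le> card {i. t \<le> lam i}"
  proof (rule card_le_if_parseval[OF finite_spectral_superlevel[OF t]
        finite_harm_index[OF finite_mu_superlevel[OF t]] _ orthonormal_harm_index])
    show "orthonormal_family \<sigma> {i. t \<le> lam i} e"
      by (rule orthonormal_family_subset[OF spectral_orthonormal]) simp
    show "(\<Sum>i\<in>{i. t \<le> lam i}. (\<integral>x. harm_fun j x * e i x \<partial>\<sigma>)\<^sup>2) = 1"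
      if "j \<in> harm_index {n. t \<le> \<mu> n}" for j
      using that parseval_Y_spectral_superlevel[OF t] by (auto simp: harm_index_def)
  qed
  then show "(\<Sum>n | t \<le> \<mu> n. a n) \<le> card {i. t \<le> lam i}"
    by (simp add: card_harm_index[OF finite_mu_superlevel[OF t]])
qed

end

lemma kernel_op_orthogonal:
  assumes Q: "orthogonal_transformation Q" and g: "g \<in> borel_measurable \<sigma>" and x: "x \<in> sphere 0 1"
  shows "kernel_op (\<lambda>y. g (Q y)) x = kernel_op g (Q x)"
proof -
  have Qx: "Q x \<in> sphere 0 1"
    using Q x by (simp add: orthogonal_transformation_norm)
  have "kernel_op (\<lambda>y. g (Q y)) x = (\<integral>y. f (Q x \<bullet> Q y) * g (Q y) \<partial>\<sigma>)"
    using Q by (simp add: kernel_op_def orthogonal_transformation_def)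
  also have "\<dots> = kernel_op g (Q x)"
    unfolding kernel_op_def using kernel_measurable[OF Qx] g
    by (intro integral_sphere_measure_orthogonal[OF Q, where g="\<lambda>y. f (Q x \<bullet> y) * g y"]) measurable
  finally show ?thesis .
qed

lemma square_integrable_Y_orthogonal:
  assumes Q: "orthogonal_transformation Q" and l: "l < a n"
  shows "square_integrable \<sigma> (\<lambda>x. Y n l (Q x))"
proof -
  obtain B where B: "\<And>x. x \<in> sphere 0 1 \<Longrightarrow> \<bar>Y n l x\<bar> \<le> B"
    using Y_bounded[OF l] by blast
  show ?thesis
  proof (rule finite_measure.square_integrable_bounded[OF finite_measure_sphere_measure])
    show "(\<lambda>x. Y n l (Q x)) \<in> borel_measurable \<sigma>"
      using measurable_compose[OF measurable_orthogonal_sphere_measure[OF Q] Y_measurable[OF l]] .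
    show "\<bar>Y n l (Q x)\<bar> \<le> B" if "x \<in> space \<sigma>" for x
      using B Q that by (simp add: orthogonal_transformation_norm)
  qed
qed

definition level_sq_sum :: "real \<Rightarrow> real^'n \<Rightarrow> real" where
  "level_sq_sum v x = (\<Sum>j\<in>harm_index {n. \<mu> n = v}. (harm_fun j x)\<^sup>2)"

lemma continuous_on_level_sq_sum: "continuous_on (sphere 0 1) (level_sq_sum v)"
  unfolding level_sq_sum_def using Y_continuous
  by (intro continuous_intros) (auto simp: harm_index_def)

context
  fixes v :: real and Q :: "real^'n \<Rightarrow> real^'n"
  assumes v: "v > 0" and Q: "orthogonal_transformation Q"
begin

definition rotation_coeff :: "nat \<times> nat \<Rightarrow> nat \<times> nat \<Rightarrow> real" where
  "rotation_coeff j j' = harm_coeff (\<lambda>x. harm_fun j (Q x)) (fst j') (snd j')"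

lemma rotated_expansion:
  assumes j: "j \<in> harm_index {n. \<mu> n = v}"
  shows "AE x in \<sigma>. harm_fun j (Q x) = (\<Sum>j'\<in>harm_index {n. \<mu> n = v}. rotation_coeff j j' * harm_fun j' x)"
  unfolding rotation_coeff_def
proof (rule eigenfunction_harm_expansion[OF finite_mu_level[OF v]])
  have l: "snd j < a (fst j)" and mu: "\<mu> (fst j) = v"
    using j by (auto simp: harm_index_def)
  show "square_integrable \<sigma> (\<lambda>x. harm_fun j (Q x))"
    by (rule square_integrable_Y_orthogonal[OF Q l])
  have "kernel_op (\<lambda>y. harm_fun j (Q y)) x = v * harm_fun j (Q x)" if "x \<in> sphere 0 1" for x
    using kernel_op_orthogonal[OF Q Y_measurable[OF l] that] kernel_op_Y[OF l] Q that mu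
    by (simp add: orthogonal_transformation_norm)
  then show "AE x in \<sigma>. kernel_op (\<lambda>y. harm_fun j (Q y)) x = v * harm_fun j (Q x)"
    by (intro AE_I2) simp
qed auto

lemma rotation_coeff_orthonormal:
  assumes j: "j \<in> harm_index {n. \<mu> n = v}" and j'': "j'' \<in> harm_index {n. \<mu> n = v}"
  shows "(\<Sum>j'\<in>harm_index {n. \<mu> n = v}. rotation_coeff j j' * rotation_coeff j'' j') =
    (if j = j'' then 1 else 0)"
proof -
  have l: "snd j < a (fst j)" "snd j'' < a (fst j'')"
    using j j'' by (auto simp: harm_index_def)
  have "(\<Sum>j'\<in>harm_index {n. \<mu> n = v}. rotation_coeff j j' * rotation_coeff j'' j') =
      (\<integral>x. harm_fun j'' (Q x) * harm_fun j (Q x) \<partial>\<sigma>)"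
    using integral_mult_finite_expansion[OF finite_harm_index[OF finite_mu_level[OF v]]
        rotated_expansion[OF j] _ square_integrable_Y_orthogonal[OF Q l(2)]
        orthonormal_familyD(1)[OF orthonormal_harm_index]]
      square_integrableD(1)[OF square_integrable_Y_orthogonal[OF Q l(1)]]
    by (simp add: rotation_coeff_def harm_coeff_def mult.commute)
  also have "\<dots> = (\<integral>x. harm_fun j'' x * harm_fun j x \<partial>\<sigma>)"
    using Y_measurable[OF l(1)] Y_measurable[OF l(2)]
    by (intro integral_sphere_measure_orthogonal[OF Q, where g="\<lambda>x. harm_fun j'' x * harm_fun j x"]) measurable
  also have "\<dots> = (if j = j'' then 1 else 0)"
    using orthonormal_familyD(3)[OF orthonormal_harm_index j'' j] by auto
  finally show ?thesis .
qed

lemma level_sq_sum_orthogonal_le: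
  assumes x: "x \<in> sphere 0 1"
  shows "level_sq_sum v (Q x) \<le> level_sq_sum v x"
proof -
  have "AE x in \<sigma>. \<forall>j\<in>harm_index {n. \<mu> n = v}.
      harm_fun j (Q x) = (\<Sum>j'\<in>harm_index {n. \<mu> n = v}. rotation_coeff j j' * harm_fun j' x)"
    by (rule AE_finite_allI[OF finite_harm_index[OF finite_mu_level[OF v]]]) (rule rotated_expansion)
  then have "AE x in \<sigma>. 0 \<le> level_sq_sum v x - level_sq_sum v (Q x)"
  proof eventually_elim
    case (elim x)
    have "level_sq_sum v (Q x) = (\<Sum>j\<in>harm_index {n. \<mu> n = v}.
        (\<Sum>j'\<in>harm_index {n. \<mu> n = v}. harm_fun j' x * rotation_coeff j j')\<^sup>2)"
      unfolding level_sq_sum_def using elim by (intro sum.cong refl) (simp add: mult.commute)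
    also have "\<dots> \<le> level_sq_sum v x"
      unfolding level_sq_sum_def
      by (rule bessel_inequality_finite[OF finite_harm_index[OF finite_mu_level[OF v]]
            finite_harm_index[OF finite_mu_level[OF v]] rotation_coeff_orthonormal])
    finally show ?case by simp
  qed
  moreover have "continuous_on (sphere 0 1) (\<lambda>x. level_sq_sum v (Q x))"
    using Q continuous_on_level_sq_sum
    by (intro continuous_on_compose2[OF continuous_on_level_sq_sum linear_continuous_on])
      (auto simp: orthogonal_transformation_norm linear_conv_bounded_linear[symmetric]
        orthogonal_transformation_linear)
  ultimately show ?thesis
    using nonneg_if_AE_nonneg_continuous_on_sphere[OF continuous_on_diff[OF continuous_on_level_sq_sum] _ x]
    by simp
qed

end

text \<open>A substitute for the addition theorem, which holds because rotations preserve every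
  eigenspace of the rotation-invariant kernel.\<close>

lemma level_sq_sum_eq_card:
  assumes v: "v > 0" and x: "x \<in> sphere 0 1"
  shows "level_sq_sum v x = real (card (harm_index {n. \<mu> n = v}))"
proof -
  have const: "level_sq_sum v y = level_sq_sum v x" if y: "y \<in> sphere 0 1" for y
  proof -
    have "level_sq_sum v y \<le> level_sq_sum v z" if "y \<in> sphere 0 1" "z \<in> sphere 0 1" for y z
    proof -
      have "norm z = norm y"
        using that by simp
      then obtain Q where "orthogonal_transformation Q" "Q z = y"
        by (rule orthogonal_transformation_exists)
      then show ?thesis
        using level_sq_sum_orthogonal_le[OF v _ that(2)] by blast
    qed
    then show ?thesis
      using x y by (meson antisym)
  qed
  have "(\<integral>y. level_sq_sum v y \<partial>\<sigma>) = (\<Sum>j\<in>harm_index {n. \<mu> n = v}. \<integral>y. (harm_fun j y)\<^sup>2 \<partial>\<sigma>)"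
    unfolding level_sq_sum_def
    using orthonormal_familyD(1)[OF orthonormal_harm_index]
    by (intro Bochner_Integration.integral_sum) (simp add: square_integrable_def)
  also have "\<dots> = real (card (harm_index {n. \<mu> n = v}))"
    using orthonormal_familyD(2)[OF orthonormal_harm_index] by simp
  finally have "(\<integral>y. level_sq_sum v y \<partial>\<sigma>) = real (card (harm_index {n. \<mu> n = v}))" .
  moreover have "(\<integral>y. level_sq_sum v y \<partial>\<sigma>) = (\<integral>y. level_sq_sum v x \<partial>\<sigma>)"
    using const by (intro Bochner_Integration.integral_cong) simp_all
  moreover have "(\<integral>y. level_sq_sum v x \<partial>\<sigma>) = level_sq_sum v x"
    using prob_space.prob_space[OF prob_space_sphere_measure[where 'n='n]] by simp
  ultimately show ?thesis by simp
qed

end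

lemma enumeration_by_injection:
  fixes r :: "'a \<Rightarrow> nat"
  assumes inj: "inj_on r S" and R: "infinite (r ` S)"
  obtains \<phi> :: "nat \<Rightarrow> 'a" where "bij_betw \<phi> UNIV S" "strict_mono (r \<circ> \<phi>)"
proof
  show "bij_betw (\<lambda>i. inv_into S r (enumerate (r ` S) i)) UNIV S"
    using bij_betw_trans[OF bij_enumerate[OF R] bij_betw_inv_into[of r S "r ` S"]] inj
    by (simp add: bij_betw_def o_def)
  have "r (inv_into S r (enumerate (r ` S) i)) = enumerate (r ` S) i" for i
    using enumerate_in_set[OF R] by (rule f_inv_into_f)
  then show "strict_mono (r \<circ> (\<lambda>i. inv_into S r (enumerate (r ` S) i)))"
    using strict_mono_enumerate[OF R] by (simp add: o_def)
qed

text \<open>Ties are broken by \<open>to_nat\<close>; each element is placed at its rank, the (finite) number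
  of elements preceding it.\<close>

lemma antimono_enumeration:
  fixes w :: "'a::countable \<Rightarrow> real"
  assumes S: "infinite S" and pos: "\<And>j. j \<in> S \<Longrightarrow> w j > 0"
    and finite_superlevel: "\<And>t. t > 0 \<Longrightarrow> finite {j \<in> S. t \<le> w j}"
  obtains \<phi> :: "nat \<Rightarrow> 'a" where "bij_betw \<phi> UNIV S" "antimono (w \<circ> \<phi>)"
proof -
  define prec where "prec j j' \<longleftrightarrow> w j' < w j \<or> (w j = w j' \<and> to_nat j < to_nat j')" for j j'
  define rank where "rank j = card {j' \<in> S. prec j' j}" for j
  have rank_less: "rank j < rank j'" if "j \<in> S" "j' \<in> S" "prec j j'" for j j'
  proof -
    have "{j'' \<in> S. prec j'' j'} \<subseteq> {j'' \<in> S. w j' \<le> w j''}"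
      by (auto simp: prec_def)
    then have "finite {j'' \<in> S. prec j'' j'}"
      using finite_superlevel[OF pos[OF that(2)]] by (rule finite_subset)
    moreover have "{j'' \<in> S. prec j'' j} \<subset> {j'' \<in> S. prec j'' j'}"
      using that by (auto simp: prec_def)
    ultimately show ?thesis
      unfolding rank_def by (rule psubset_card_mono)
  qed
  have "prec j j' \<or> prec j' j" if "j \<noteq> j'" for j j'
  proof -
    have "to_nat j < to_nat j' \<or> to_nat j' < to_nat j"
      using that by (metis inj_eq inj_to_nat linorder_neqE_nat)
    then show ?thesis
      by (auto simp: prec_def)
  qed
  then have inj: "inj_on rank S"
    using rank_less by (metis inj_onI less_irrefl)
  moreover have "infinite (rank ` S)"
    using S inj finite_imageD by blast
  ultimately obtain \<phi> :: "nat \<Rightarrow> 'a" where \<phi>: "bij_betw \<phi> UNIV S" and mono: "strict_mono (rank \<circ> \<phi>)"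
    by (rule enumeration_by_injection)
  have "antimono (w \<circ> \<phi>)"
  proof (rule antimonoI, rule ccontr)
    fix i i' :: nat assume "i \<le> i'" "\<not> (w \<circ> \<phi>) i' \<le> (w \<circ> \<phi>) i"
    then have "rank (\<phi> i') < rank (\<phi> i)"
      using bij_betwE[OF \<phi>] by (intro rank_less) (auto simp: prec_def)
    then show False
      using \<open>i \<le> i'\<close> strict_mono_less_eq[OF mono] by (metis comp_apply leD less_imp_le)
  qed
  with \<phi> show ?thesis
    by (rule that)
qed

context sphere_mercer_kernel
begin

context
  fixes lam :: "nat \<Rightarrow> real" and e :: "nat \<Rightarrow> real^'n \<Rightarrow> real"
  assumes spectral: "spectral_system \<sigma> (\<lambda>x y. f (x \<bullet> y)) lam e"
begin

lemma AE_spectral_level_expansion: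
  "AE x in \<sigma>. \<forall>i. e i x =
     (\<Sum>j\<in>harm_index {n. \<mu> n = lam i}. harm_coeff (e i) (fst j) (snd j) * harm_fun j x)"
  unfolding AE_all_countable
  using spectral_expansion[OF spectral finite_mu_level[OF spectral_pos[OF spectral]]] by blast

lemma spectral_level_coeff_orthonormal:
  assumes "lam i' = lam i"
  shows "(\<Sum>j\<in>harm_index {n. \<mu> n = lam i}.
      harm_coeff (e i) (fst j) (snd j) * harm_coeff (e i') (fst j) (snd j)) = (if i = i' then 1 else 0)"
proof -
  have "(\<integral>x. e i' x * e i x \<partial>\<sigma>) = (\<Sum>j\<in>harm_index {n. \<mu> n = lam i}.
      harm_coeff (e i) (fst j) (snd j) * (\<integral>x. e i' x * harm_fun j x \<partial>\<sigma>))"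
    using spectral_expansion[OF spectral finite_mu_level[OF spectral_pos[OF spectral]], of _ i]
      square_integrableD(1)[OF spectral_square_integrable[OF spectral]]
    by (intro integral_mult_finite_expansion[OF finite_harm_index[OF finite_mu_level[OF spectral_pos[OF spectral]]]
          _ _ spectral_square_integrable[OF spectral] orthonormal_familyD(1)[OF orthonormal_harm_index]]) auto
  then show ?thesis
    using orthonormal_familyD(3)[OF spectral_orthonormal[OF spectral], of i' i]
    by (auto simp: harm_coeff_def mult.commute)
qed

lemma sum_spectral_level_sq_le:
  assumes x: "x \<in> sphere 0 1"
    and expansion: "\<forall>i. e i x = (\<Sum>j\<in>harm_index {n. \<mu> n = lam i}. harm_coeff (e i) (fst j) (snd j) * harm_fun j x)"
    and I: "finite I" "\<And>i. i \<in> I \<Longrightarrow> lam i = v" and v: "v > 0"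
  shows "(\<Sum>i\<in>I. (e i x)\<^sup>2) \<le> real (card (harm_index {n. \<mu> n = v}))"
proof -
  have "(\<Sum>i\<in>I. (e i x)\<^sup>2) =
      (\<Sum>i\<in>I. (\<Sum>j\<in>harm_index {n. \<mu> n = v}. harm_fun j x * harm_coeff (e i) (fst j) (snd j))\<^sup>2)"
    using expansion I(2) by (intro sum.cong refl) (simp add: mult.commute)
  also have "\<dots> \<le> (\<Sum>j\<in>harm_index {n. \<mu> n = v}. (harm_fun j x)\<^sup>2)"
  proof (rule bessel_inequality_finite[OF I(1) finite_harm_index[OF finite_mu_level[OF v]]])
    fix i i' assume "i \<in> I" "i' \<in> I"
    then have "lam i = v" "lam i' = v"
      using I(2) by auto
    then show "(\<Sum>j\<in>harm_index {n. \<mu> n = v}.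
        harm_coeff (e i) (fst j) (snd j) * harm_coeff (e i') (fst j) (snd j)) = (if i = i' then 1 else 0)"
      using spectral_level_coeff_orthonormal[of i' i] by simp
  qed
  also have "\<dots> = real (card (harm_index {n. \<mu> n = v}))"
    using level_sq_sum_eq_card[OF v x] by (simp add: level_sq_sum_def)
  finally show ?thesis .
qed

lemma sum_spectral_weighted_le:
  assumes x: "x \<in> sphere 0 1"
    and expansion: "\<forall>i. e i x = (\<Sum>j\<in>harm_index {n. \<mu> n = lam i}. harm_coeff (e i) (fst j) (snd j) * harm_fun j x)"
    and summable: "summable (\<lambda>n. \<mu> n powr \<alpha> * a n)"
  shows "(\<Sum>i<N. lam i powr \<alpha> * (e i x)\<^sup>2) \<le> (\<Sum>n. \<mu> n powr \<alpha> * a n)"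
proof -
  define V where "V = lam ` {..<N}"
  have V: "finite V" "\<And>v. v \<in> V \<Longrightarrow> v > 0"
    using spectral_pos[OF spectral] by (auto simp: V_def)
  have "(\<Sum>i<N. lam i powr \<alpha> * (e i x)\<^sup>2) = (\<Sum>v\<in>V. \<Sum>i | i \<in> {..<N} \<and> lam i = v. lam i powr \<alpha> * (e i x)\<^sup>2)"
    unfolding V_def by (rule sum.image_gen) simp
  also have "\<dots> \<le> (\<Sum>v\<in>V. \<Sum>n | \<mu> n = v. \<mu> n powr \<alpha> * a n)"
  proof (rule sum_mono)
    fix v assume "v \<in> V"
    then have v: "v > 0" using V(2) by blast
    have "(\<Sum>i | i \<in> {..<N} \<and> lam i = v. lam i powr \<alpha> * (e i x)\<^sup>2) =
        v powr \<alpha> * (\<Sum>i | i \<in> {..<N} \<and> lam i = v. (e i x)\<^sup>2)"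
      by (simp add: sum_distrib_left)
    also have "\<dots> \<le> v powr \<alpha> * real (card (harm_index {n. \<mu> n = v}))"
    proof (rule mult_left_mono)
      show "(\<Sum>i | i \<in> {..<N} \<and> lam i = v. (e i x)\<^sup>2) \<le> real (card (harm_index {n. \<mu> n = v}))"
        by (rule sum_spectral_level_sq_le[OF x expansion _ _ v]) simp_all
    qed simp
    also have "\<dots> = (\<Sum>n | \<mu> n = v. \<mu> n powr \<alpha> * a n)"
      by (simp add: card_harm_index[OF finite_mu_level[OF v]] sum_distrib_left)
    finally show "(\<Sum>i | i \<in> {..<N} \<and> lam i = v. lam i powr \<alpha> * (e i x)\<^sup>2) \<le>
        (\<Sum>n | \<mu> n = v. \<mu> n powr \<alpha> * a n)" .
  qed
  also have "\<dots> = (\<Sum>n\<in>(\<Union>v\<in>V. {n. \<mu> n = v}). \<mu> n powr \<alpha> * a n)"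
    using V finite_mu_level by (intro sum.UNION_disjoint[symmetric]) auto
  also have "\<dots> \<le> (\<Sum>n. \<mu> n powr \<alpha> * a n)"
    using V finite_mu_level by (intro sum_le_suminf[OF summable]) auto
  finally show ?thesis .
qed

lemma embedding_M_finite:
  assumes summable: "summable (\<lambda>n. \<mu> n powr \<alpha> * a n)"
  shows "embedding_M \<sigma> lam e \<alpha> < \<top>"
proof -
  define B where "B = (\<Sum>n. \<mu> n powr \<alpha> * a n)"
  have "B \<ge> 0"
    unfolding B_def by (rule suminf_nonneg[OF summable]) simp
  have "AE x in \<sigma>. (\<Sum>i. ennreal (lam i powr \<alpha> * (e i x)\<^sup>2)) \<le> (ennreal (sqrt B))\<^sup>2"
    using AE_space AE_spectral_level_expansion
  proof eventually_elim
    case (elim x)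
    have "(\<Sum>i. ennreal (lam i powr \<alpha> * (e i x)\<^sup>2)) = (SUP N. \<Sum>i<N. ennreal (lam i powr \<alpha> * (e i x)\<^sup>2))"
      by (rule suminf_eq_SUP)
    also have "\<dots> \<le> ennreal B"
    proof (rule SUP_least)
      fix N
      have "x \<in> sphere 0 1"
        using elim(1) by simp
      then show "(\<Sum>i<N. ennreal (lam i powr \<alpha> * (e i x)\<^sup>2)) \<le> ennreal B"
        using sum_spectral_weighted_le[OF _ elim(2) summable, of N]
        by (simp add: B_def sum_ennreal ennreal_leI)
    qed
    also have "\<dots> = (ennreal (sqrt B))\<^sup>2"
      using \<open>B \<ge> 0\<close> by (simp add: ennreal_power)
    finally show ?case .
  qed
  then have "embedding_M \<sigma> lam e \<alpha> \<le> ennreal (sqrt B)"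
    unfolding embedding_M_def by (intro Inf_lower) simp
  then show ?thesis
    using ennreal_less_top order.strict_trans1 by blast
qed

end

lemma infinite_harm_index: "infinite F \<Longrightarrow> infinite (harm_index F)"
proof -
  assume F: "infinite F"
  have "(\<lambda>n. (n, 0)) ` F \<subseteq> harm_index F"
    using harm_dim_pos[OF d_pos] by (auto simp: mem_harm_index Suc_le_eq)
  moreover have "infinite ((\<lambda>n. (n, 0::nat)) ` F)"
    using F by (auto dest: finite_imageD simp: inj_on_def)
  ultimately show ?thesis
    using infinite_super by blast
qed

lemma spectral_system_enumeration:
  assumes \<phi>: "bij_betw \<phi> UNIV (harm_index {n. \<mu> n > 0})"
    and anti: "antimono (\<lambda>i. \<mu> (fst (\<phi> i)))"
  shows "spectral_system \<sigma> (\<lambda>x y. f (x \<bullet> y)) (\<lambda>i. \<mu> (fst (\<phi> i))) (\<lambda>i. harm_fun (\<phi> i))"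
  unfolding spectral_system_def
proof (intro conjI allI ballI impI)
  have \<phi>_in: "snd (\<phi> i) < a (fst (\<phi> i))" "\<mu> (fst (\<phi> i)) > 0" for i
  proof -
    have "\<phi> i \<in> harm_index {n. \<mu> n > 0}"
      using bij_betwE[OF \<phi>] by blast
    then show "snd (\<phi> i) < a (fst (\<phi> i))" "\<mu> (fst (\<phi> i)) > 0"
      using mem_harm_index[of "fst (\<phi> i)" "snd (\<phi> i)"] by simp_all
  qed
  fix i j
  show "harm_fun (\<phi> i) \<in> borel_measurable \<sigma>" "integrable \<sigma> (\<lambda>x. (harm_fun (\<phi> i) x)\<^sup>2)"
    using Y_square_integrable[OF \<phi>_in(1)] by (simp_all add: square_integrable_def)
  show "\<mu> (fst (\<phi> i)) > 0"
    by (rule \<phi>_in(2))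
  show "AE x in \<sigma>. (\<integral>y. f (x \<bullet> y) * harm_fun (\<phi> i) y \<partial>\<sigma>) = \<mu> (fst (\<phi> i)) * harm_fun (\<phi> i) x"
    using kernel_op_Y[OF \<phi>_in(1)] by (intro AE_I2) (simp add: kernel_op_def)
  show "(\<integral>x. harm_fun (\<phi> i) x * harm_fun (\<phi> j) x \<partial>\<sigma>) = (if i = j then 1 else 0)"
    using Y_orthonormal[OF \<phi>_in(1) \<phi>_in(1), of i j] bij_betw_imp_inj_on[OF \<phi>]
    by (auto simp: inj_eq prod_eq_iff[symmetric])
next
  show "antimono (\<lambda>i. \<mu> (fst (\<phi> i)))"
    by (rule anti)
next
  fix g assume g: "g \<in> borel_measurable \<sigma>" "integrable \<sigma> (\<lambda>x. (g x)\<^sup>2)"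
    and orth: "\<forall>i. (\<integral>x. g x * harm_fun (\<phi> i) x \<partial>\<sigma>) = 0"
  have "harm_coeff g n l = 0" if "l < a n" "\<mu> n \<noteq> 0" for n l
  proof -
    have "(n, l) \<in> range \<phi>"
      using that mu_nonneg[of n] bij_betw_imp_surj_on[OF \<phi>] by (simp add: mem_harm_index)
    then obtain i where "(n, l) = \<phi> i"
      by (rule rangeE)
    then have "harm_coeff g n l = (\<integral>x. g x * harm_fun (\<phi> i) x \<partial>\<sigma>)"
      by (auto simp: harm_coeff_def mult.commute dest: sym)
    then show ?thesis
      using orth by simp
  qed
  moreover have "integrable \<sigma> g"
    using g by (intro finite_measure.integrable_square_integrable[OF finite_measure_sphere_measure])
      (simp add: square_integrable_def)
  ultimately show "AE x in \<sigma>. (\<integral>y. f (x \<bullet> y) * g y \<partial>\<sigma>) = 0"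
    using kernel_op_eq_0_if_coeffs_vanish by (intro AE_I2) (simp add: kernel_op_def)
qed

lemma spectral_system_exists:
  assumes "infinite {n. \<mu> n > 0}"
  shows "\<exists>lam e. spectral_system \<sigma> (\<lambda>x y. f (x \<bullet> y)) lam e"
proof -
  have pos: "\<mu> (fst j) > 0" if "j \<in> harm_index {n. \<mu> n > 0}" for j
    using that by (auto simp: harm_index_def)
  have superlevel: "finite {j \<in> harm_index {n. \<mu> n > 0}. t \<le> \<mu> (fst j)}" if "t > 0" for t
    using finite_harm_index[OF finite_mu_superlevel[OF that]]
    by (rule finite_subset[rotated]) (auto simp: harm_index_def)
  obtain \<phi> :: "nat \<Rightarrow> nat \<times> nat"
    where "bij_betw \<phi> UNIV (harm_index {n. \<mu> n > 0})" "antimono ((\<lambda>j. \<mu> (fst j)) \<circ> \<phi>)"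
    by (rule antimono_enumeration[where w="\<lambda>j. \<mu> (fst j)", OF infinite_harm_index[OF assms] pos superlevel])
  then show ?thesis
    using spectral_system_enumeration by (auto simp: o_def)
qed

end

section \<open>Counting functions and decay rates\<close>

lemma decay_upper_if_count_le:
  fixes lam :: "nat \<Rightarrow> real"
  assumes anti: "antimono lam" and pos: "\<And>i. lam i > 0" and \<beta>: "\<beta> > 0"
    and count: "\<And>t. 0 < t \<Longrightarrow> t \<le> lam 0 \<Longrightarrow>
      finite {i. t \<le> lam i} \<and> real (card {i. t \<le> lam i}) \<le> A * t powr (- 1 / \<beta>)"
  shows "lam i \<le> A powr \<beta> * real (Suc i) powr (- \<beta>)"
proof -
  have t: "0 < lam i" "lam i \<le> lam 0"
    using pos anti by (auto simp: antimono_def)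
  have "{..i} \<subseteq> {j. lam i \<le> lam j}"
    using anti by (auto simp: antimono_def)
  then have "card {..i} \<le> card {j. lam i \<le> lam j}"
    using count[OF t] by (intro card_mono) auto
  then have "real (Suc i) \<le> real (card {j. lam i \<le> lam j})"
    by simp
  also have "\<dots> \<le> A * lam i powr (- 1 / \<beta>)"
    using count[OF t] by blast
  finally have le: "real (Suc i) \<le> A * lam i powr (- 1 / \<beta>)" .
  then have "0 < A * lam i powr (- 1 / \<beta>)"
    by (rule less_le_trans[rotated]) simp
  then have A: "A > 0"
    by (simp add: zero_less_mult_iff)
  have "real (Suc i) powr \<beta> \<le> (A * lam i powr (- 1 / \<beta>)) powr \<beta>"
    using le \<beta> by (intro powr_mono2) auto
  also have "\<dots> = A powr \<beta> * (lam i powr (- 1 / \<beta>)) powr \<beta>"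
    using A by (simp add: powr_mult)
  also have "(lam i powr (- 1 / \<beta>)) powr \<beta> = inverse (lam i)"
    using \<beta> t by (simp add: powr_powr powr_neg_one inverse_eq_divide)
  finally show ?thesis
    using t A by (simp add: powr_minus field_simps)
qed

lemma card_superlevel_le_if_antimono:
  fixes lam :: "nat \<Rightarrow> real"
  assumes "antimono lam" "lam i < s"
  shows "card {j. s \<le> lam j} \<le> i"
proof -
  have "lam j < s" if "i \<le> j" for j
    using antimonoD[OF assms(1) that] assms(2) by linarith
  then have "{j. s \<le> lam j} \<subseteq> {..<i}"
    by (auto simp: not_less[symmetric])
  then show ?thesis
    using card_mono[of "{..<i}"] by fastforce
qed

lemma mult_powr_inverse_powr:
  fixes B x \<beta> :: real
  assumes "B > 0" "x \<ge> 0" "\<beta> > 0"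
  shows "B * (B powr \<beta> * x powr (- \<beta>)) powr (- 1 / \<beta>) = x"
proof -
  have "(B powr \<beta>) powr (- 1 / \<beta>) = B powr (- 1)" "(x powr (- \<beta>)) powr (- 1 / \<beta>) = x powr 1"
    using assms(3) by (simp_all add: powr_powr)
  then show ?thesis
    using assms(1,2) by (simp add: powr_mult powr_neg_one)
qed

lemma decay_lower_if_count_ge:
  fixes lam :: "nat \<Rightarrow> real"
  assumes anti: "antimono lam" and \<beta>: "\<beta> > 0" and B: "B > 0"
    and count: "\<And>t. 0 < t \<Longrightarrow> B * t powr (- 1 / \<beta>) \<le> real (card {i. t \<le> lam i}) + 1"
  shows "(B / 2) powr \<beta> * real (Suc i) powr (- \<beta>) \<le> lam i"
proof -
  define s where "s = B powr \<beta> * real (i + 2) powr (- \<beta>)"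
  have "s \<le> lam i"
  proof (rule ccontr)
    assume "\<not> s \<le> lam i"
    then have "real (card {j. s \<le> lam j}) \<le> real i"
      using card_superlevel_le_if_antimono[OF anti] by simp
    moreover have "s > 0"
      using B by (simp add: s_def)
    ultimately show False
      using count[of s] mult_powr_inverse_powr[OF B _ \<beta>, of "real (i + 2)"] by (simp add: s_def)
  qed
  moreover have "(B / 2) powr \<beta> * real (Suc i) powr (- \<beta>) \<le> s"
  proof -
    have "(B / 2) powr \<beta> = B powr \<beta> * 2 powr (- \<beta>)"
      unfolding powr_divide powr_minus by (rule divide_inverse)
    moreover have "(2 * real (Suc i)) powr (- \<beta>) = 2 powr (- \<beta>) * real (Suc i) powr (- \<beta>)"
      by (rule powr_mult)
    ultimately have "(B / 2) powr \<beta> * real (Suc i) powr (- \<beta>) = B powr \<beta> * (2 * real (Suc i)) powr (- \<beta>)"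
      by (simp only: mult.assoc)
    also have "\<dots> \<le> s"
      unfolding s_def using B \<beta> by (intro mult_left_mono powr_mono2') auto
    finally show ?thesis .
  qed
  ultimately show ?thesis
    by linarith
qed

lemma Inf_eq_if_greaterThanAtMost_subset:
  fixes A :: "real set"
  assumes "a < b" "{a<..b} \<subseteq> A" "A \<subseteq> {a..b}"
  shows "Inf A = a"
proof (rule antisym)
  have "bdd_below A"
    using assms(3) by (auto intro!: bdd_belowI[of _ a])
  then have "Inf A \<le> Inf {a<..b}"
    using assms by (intro cInf_superset_mono) auto
  then show "Inf A \<le> a"
    using assms(1) by simp
  show "a \<le> Inf A"
    using assms by (intro cInf_greatest) auto
qed

lemma le_powr_inverse_iff:
  fixes x X p :: real
  assumes "p > 0" "x \<ge> 0" "X \<ge> 0"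
  shows "x \<le> X powr (1 / p) \<longleftrightarrow> x powr p \<le> X"
proof
  assume "x \<le> X powr (1 / p)"
  then have "x powr p \<le> (X powr (1 / p)) powr p"
    using assms by (intro powr_mono2) auto
  then show "x powr p \<le> X"
    using assms by (simp add: powr_powr)
next
  assume "x powr p \<le> X"
  then have "(x powr p) powr (1 / p) \<le> X powr (1 / p)"
    using assms by (intro powr_mono2) auto
  then show "x \<le> X powr (1 / p)"
    using assms by (simp add: powr_powr)
qed

lemma powr_divide_eq_mult_powr_neg:
  fixes x y b :: real
  shows "(x / y) powr (1 / b) = x powr (1 / b) * y powr (- 1 / b)"
  unfolding powr_divide using powr_minus[of y "1 / b"] by (simp add: divide_inverse)

section \<open>Kernels with polynomially decaying Mercer coefficients\<close>

locale sphere_mercer_kernel_decay = sphere_mercer_kernel f \<mu> Y d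
  for f :: "real \<Rightarrow> real" and \<mu> :: "nat \<Rightarrow> real" and Y :: "nat \<Rightarrow> nat \<Rightarrow> real^'n \<Rightarrow> real"
    and d :: nat +
  fixes \<beta> c C :: real
  assumes beta_gt_1: "\<beta> > 1" and c_pos: "c > 0" and C_pos: "C > 0"
    and mu_lower: "\<And>n. n \<ge> 1 \<Longrightarrow> c * real n powr (- (real d * \<beta>)) \<le> \<mu> n"
    and mu_upper: "\<And>n. n \<ge> 1 \<Longrightarrow> \<mu> n \<le> C * real n powr (- (real d * \<beta>))"
begin

lemma d_beta_pos: "real d * \<beta> > 0"
  using d_pos beta_gt_1 by simp

lemma mu_pos:
  assumes "n \<ge> 1"
  shows "\<mu> n > 0"
proof -
  have "0 < c * real n powr (- (real d * \<beta>))"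
    using c_pos assms by simp
  then show ?thesis
    using mu_lower[OF assms] by linarith
qed

lemma infinite_mu_pos: "infinite {n. \<mu> n > 0}"
proof -
  have "{1..} \<subseteq> {n. \<mu> n > 0}"
    using mu_pos by auto
  then show ?thesis
    using infinite_Ici infinite_super by blast
qed

lemma mu_superlevel_subset:
  assumes t: "t > 0"
  shows "{n. t \<le> \<mu> n} \<subseteq> {..nat \<lfloor>(C / t) powr (1 / (real d * \<beta>))\<rfloor>}"
proof
  fix n assume "n \<in> {n. t \<le> \<mu> n}"
  then have tn: "t \<le> \<mu> n" by simp
  show "n \<in> {..nat \<lfloor>(C / t) powr (1 / (real d * \<beta>))\<rfloor>}"
  proof (cases "n \<ge> 1")
    case True
    then have "t \<le> C / real n powr (real d * \<beta>)"
      using tn mu_upper[OF True] by (simp add: powr_minus divide_inverse)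
    then have "real n powr (real d * \<beta>) \<le> C / t"
      using t True by (simp add: field_simps)
    then have "real n \<le> (C / t) powr (1 / (real d * \<beta>))"
      using le_powr_inverse_iff[OF d_beta_pos] t C_pos by simp
    then show ?thesis
      by (simp add: le_nat_floor)
  qed simp
qed

lemma mu_superlevel_supset:
  assumes t: "t > 0"
  shows "{1..nat \<lfloor>(c / t) powr (1 / (real d * \<beta>))\<rfloor>} \<subseteq> {n. t \<le> \<mu> n}"
proof
  fix n assume n: "n \<in> {1..nat \<lfloor>(c / t) powr (1 / (real d * \<beta>))\<rfloor>}"
  then have "int n \<le> \<lfloor>(c / t) powr (1 / (real d * \<beta>))\<rfloor>"
    by (simp add: le_nat_iff)
  then have "real n \<le> real_of_int \<lfloor>(c / t) powr (1 / (real d * \<beta>))\<rfloor>"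
    by linarith
  also have "\<dots> \<le> (c / t) powr (1 / (real d * \<beta>))"
    by (rule of_int_floor_le)
  finally have "real n \<le> (c / t) powr (1 / (real d * \<beta>))" .
  then have "real n powr (real d * \<beta>) \<le> c / t"
    using le_powr_inverse_iff[OF d_beta_pos] t c_pos by simp
  then have "t \<le> c * real n powr (- (real d * \<beta>))"
    using t n by (simp add: powr_minus field_simps)
  then show "n \<in> {n. t \<le> \<mu> n}"
    using mu_lower[of n] n by simp
qed

lemma powr_harm_scale:
  assumes "X > 0"
  shows "(X powr (1 / (real d * \<beta>))) ^ d = X powr (1 / \<beta>)"
proof -
  have "(X powr (1 / (real d * \<beta>))) ^ d = (X powr (1 / (real d * \<beta>))) powr real d"
    using assms by (simp add: powr_realpow)
  also have "\<dots> = X powr (1 / \<beta>)"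
    using d_pos by (simp add: powr_powr)
  finally show ?thesis .
qed

lemma count_mu_superlevel_le:
  assumes T: "T > 0"
  obtains A where "A > 0"
    "\<And>t. 0 < t \<Longrightarrow> t \<le> T \<Longrightarrow> real (\<Sum>n | t \<le> \<mu> n. a n) \<le> A * t powr (- 1 / \<beta>)"
proof -
  define R where "R t = (C / t) powr (1 / (real d * \<beta>))" for t
  define K where "K = 1 + (1 + real d) / R T"
  have RT: "R T > 0"
    using C_pos T by (simp add: R_def)
  have "real (\<Sum>n | t \<le> \<mu> n. a n) \<le> (2 * K ^ d * C powr (1 / \<beta>)) * t powr (- 1 / \<beta>)"
    if t: "0 < t" "t \<le> T" for t
  proof -
    have RTt: "R T \<le> R t"
      unfolding R_def using t C_pos d_beta_pos by (intro powr_mono2 divide_left_mono) auto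
    have "(\<Sum>n | t \<le> \<mu> n. a n) \<le> (\<Sum>n<nat \<lfloor>R t\<rfloor> + 1. a n)"
      using mu_superlevel_subset[OF t(1)] by (intro sum_mono2) (auto simp: R_def)
    also have "\<dots> \<le> 2 * (nat \<lfloor>R t\<rfloor> + 1 + d) ^ d"
      by (rule sum_harm_dim_le)
    finally have "real (\<Sum>n | t \<le> \<mu> n. a n) \<le> 2 * (real (nat \<lfloor>R t\<rfloor>) + 1 + real d) ^ d"
      by (metis (mono_tags) of_nat_1 of_nat_add of_nat_le_iff of_nat_mult of_nat_numeral of_nat_power)
    also have "\<dots> \<le> 2 * (K * R t) ^ d"
    proof (intro mult_left_mono power_mono)
      have "real (nat \<lfloor>R t\<rfloor>) \<le> R t"
        using RT RTt by linarith
      moreover have "(1 + real d) / R T * R T \<le> (1 + real d) / R T * R t"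
        using RT RTt by (intro mult_left_mono) auto
      then have "1 + real d \<le> (1 + real d) / R T * R t"
        using RT by simp
      ultimately show "real (nat \<lfloor>R t\<rfloor>) + 1 + real d \<le> K * R t"
        by (simp add: K_def algebra_simps)
    qed simp_all
    also have "(K * R t) ^ d = K ^ d * (C powr (1 / \<beta>) * t powr (- 1 / \<beta>))"
      using powr_harm_scale[of "C / t"] C_pos t
      by (simp add: R_def power_mult_distrib powr_divide_eq_mult_powr_neg)
    finally show ?thesis
      by (simp add: mult_ac)
  qed
  moreover have "2 * K ^ d * C powr (1 / \<beta>) > 0"
    using RT C_pos by (simp add: K_def add_pos_nonneg)
  ultimately show ?thesis
    using that by blast
qed

lemma count_mu_superlevel_ge:
  assumes t: "t > 0"
  shows "c powr (1 / \<beta>) / (2 * real d) ^ d * t powr (- 1 / \<beta>) \<le> real (\<Sum>n | t \<le> \<mu> n. a n) + 1"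
proof -
  define r where "r = (c / t) powr (1 / (real d * \<beta>))"
  define M where "M = nat \<lfloor>r\<rfloor>"
  have r: "r > 0"
    using c_pos t by (simp add: r_def)
  have "c powr (1 / \<beta>) * t powr (- 1 / \<beta>) = r ^ d"
    using powr_harm_scale[of "c / t"] c_pos t by (simp add: r_def powr_divide_eq_mult_powr_neg)
  then have lhs: "c powr (1 / \<beta>) / (2 * real d) ^ d * t powr (- 1 / \<beta>) = r ^ d / (2 * real d) ^ d"
    by (simp only: times_divide_eq_left)
  have "{..<Suc M} \<subseteq> insert 0 {1..M}"
    by auto
  also have "\<dots> \<subseteq> insert 0 {n. t \<le> \<mu> n}"
    using mu_superlevel_supset[OF t] by (auto simp: M_def r_def)
  finally have "{..<Suc M} \<subseteq> insert 0 {n. t \<le> \<mu> n}" .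
  then have "(\<Sum>n<Suc M. a n) \<le> (\<Sum>n\<in>insert 0 {n. t \<le> \<mu> n}. a n)"
    using finite_mu_superlevel[OF t] by (intro sum_mono2) auto
  also have "\<dots> \<le> (\<Sum>n | t \<le> \<mu> n. a n) + 1"
    using finite_mu_superlevel[OF t] by (simp add: sum.insert_if)
  finally have count: "(real M / real d) ^ d \<le> real (\<Sum>n | t \<le> \<mu> n. a n) + 1"
    using sum_harm_dim_ge[OF d_pos, of M] by linarith
  show ?thesis
  proof (cases "r \<ge> 2")
    case True
    then have "r / 2 \<le> real M"
      unfolding M_def by linarith
    then have "(r / (2 * real d)) ^ d \<le> (real M / real d) ^ d"
      using r d_pos by (intro power_mono) (auto simp: field_simps)
    then have "r ^ d / (2 * real d) ^ d \<le> (real M / real d) ^ d"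
      by (simp only: power_divide)
    then show ?thesis
      using count lhs by linarith
  next
    case False
    have "r ^ d / (2 * real d) ^ d \<le> 2 ^ d / (2 * real d) ^ d"
      using False r by (intro divide_right_mono power_mono) auto
    also have "\<dots> = 1 / real d ^ d"
      using d_pos by (simp add: power_mult_distrib)
    also have "\<dots> \<le> 1"
      using d_pos by simp
    finally show ?thesis
      using lhs of_nat_0_le_iff[of "\<Sum>n | t \<le> \<mu> n. a n"] by linarith
  qed
qed

theorem eigenvalue_decay_rate_spectral:
  assumes spectral: "spectral_system \<sigma> (\<lambda>x y. f (x \<bullet> y)) lam e"
  shows "eigenvalue_decay_rate lam \<beta>"
proof -
  have \<beta>: "\<beta> > 0"
    using beta_gt_1 by simp
  obtain A where A: "A > 0"
    "\<And>t. 0 < t \<Longrightarrow> t \<le> lam 0 \<Longrightarrow> real (\<Sum>n | t \<le> \<mu> n. a n) \<le> A * t powr (- 1 / \<beta>)"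
    using count_mu_superlevel_le[OF spectral_pos[OF spectral, of 0]] by blast
  define B where "B = c powr (1 / \<beta>) / (2 * real d) ^ d"
  have B: "B > 0"
    using c_pos d_pos by (simp add: B_def)
  have "lam i \<le> A powr \<beta> * real (Suc i) powr (- \<beta>)" for i
    using A finite_spectral_superlevel[OF spectral] card_spectral_superlevel[OF spectral]
    by (intro decay_upper_if_count_le[OF spectral_antimono[OF spectral] spectral_pos[OF spectral] \<beta>])
      simp
  moreover have "(B / 2) powr \<beta> * real (Suc i) powr (- \<beta>) \<le> lam i" for i
    using count_mu_superlevel_ge card_spectral_superlevel[OF spectral]
    by (intro decay_lower_if_count_ge[OF spectral_antimono[OF spectral] \<beta> B]) (simp add: B_def)
  moreover have "A powr \<beta> > 0" "(B / 2) powr \<beta> > 0"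
    using A B by simp_all
  ultimately show ?thesis
    unfolding eigenvalue_decay_rate_def by blast
qed

lemma mu_powr_le:
  assumes n: "n \<ge> 1" and \<alpha>: "\<alpha> > 0"
  shows "\<mu> n powr \<alpha> \<le> C powr \<alpha> * real n powr (- (real d * \<beta> * \<alpha>))"
proof -
  have "\<mu> n powr \<alpha> \<le> (C * real n powr (- (real d * \<beta>))) powr \<alpha>"
    using mu_upper[OF n] mu_pos[OF n] \<alpha> by (intro powr_mono2) auto
  also have "\<dots> = C powr \<alpha> * real n powr (- (real d * \<beta> * \<alpha>))"
    by (simp add: powr_mult powr_powr)
  finally show ?thesis .
qed

lemma summable_mu_powr_harm_dim:
  assumes \<alpha>: "\<alpha> > 1 / \<beta>"
  shows "summable (\<lambda>n. \<mu> n powr \<alpha> * a n)"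
proof -
  have \<alpha>_pos: "\<alpha> > 0"
    using \<alpha> beta_gt_1 by (smt (verit) divide_pos_pos)
  define p where "p = real d - 1 - real d * \<beta> * \<alpha>"
  have "real d * 1 < real d * (\<beta> * \<alpha>)"
    using \<alpha> beta_gt_1 d_pos by (intro mult_strict_left_mono) (auto simp: field_simps)
  then have p: "p < -1"
    by (simp add: p_def mult.assoc)
  define K where "K = C powr \<alpha> * (2 * (1 + real d) ^ (d - 1))"
  have "\<mu> n powr \<alpha> * a n \<le> (C powr \<alpha> * real n powr (- (real d * \<beta> * \<alpha>))) *
      (2 * (1 + real d) ^ (d - 1) * real n powr (real d - 1))" if n: "n \<ge> 1" for n
    using mu_powr_le[OF n \<alpha>_pos] harm_dim_le_powr[OF d_pos n] by (intro mult_mono) auto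
  also have "\<dots>n = K * real n powr p" for n
    by (simp add: K_def p_def powr_add[symmetric] mult_ac)
  finally have bound: "norm (\<mu> n powr \<alpha> * a n) \<le> K * real n powr p" if "n \<ge> 1" for n
    using that by simp
  have "summable (\<lambda>n. K * real n powr p)"
    using summable_real_powr_iff[of p] p by (intro summable_mult) simp
  moreover have "\<forall>\<^sub>F n in sequentially. norm (\<mu> n powr \<alpha> * a n) \<le> K * real n powr p"
    using eventually_ge_at_top[of 1] by eventually_elim (rule bound)
  ultimately show ?thesis
    by (rule summable_comparison_test_ev[rotated])
qed

theorem embedding_index_spectral:
  assumes spectral: "spectral_system \<sigma> (\<lambda>x y. f (x \<bullet> y)) lam e"
  shows "embedding_index \<sigma> lam e \<beta> = 1 / \<beta>"
  unfolding embedding_index_def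
proof (rule Inf_eq_if_greaterThanAtMost_subset)
  show "1 / \<beta> < 1"
    using beta_gt_1 by simp
  show "{1 / \<beta><..1} \<subseteq> {\<alpha> \<in> {1 / \<beta>..1}. embedding_M \<sigma> lam e \<alpha> < \<top>}"
    using embedding_M_finite[OF spectral summable_mu_powr_harm_dim] by auto
qed auto

end

theorem proposition21:
  fixes f :: "real \<Rightarrow> real"
    and \<mu> :: "nat \<Rightarrow> real"
    and Y :: "nat \<Rightarrow> nat \<Rightarrow> real ^ 'n \<Rightarrow> real"
    and \<beta> :: real
  defines "d \<equiv> CARD('n) - 1"
  defines "\<sigma> \<equiv> (sphere_measure :: (real ^ 'n) measure)"
  defines "k \<equiv> (\<lambda>x y. f (x \<bullet> y))"
  assumes dim: "CARD('n) \<ge> 2"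
    and harm: "\<And>n l. l < harm_dim d n \<Longrightarrow> Y n l \<in> sph_harm_space n"
    and orth: "\<And>n l n' l'. l < harm_dim d n \<Longrightarrow> l' < harm_dim d n' \<Longrightarrow>
                 (\<integral>x. Y n l x * Y n' l' x \<partial>\<sigma>) = (if n = n' \<and> l = l' then 1 else 0)"
    and complete: "\<And>g. g \<in> borel_measurable \<sigma> \<Longrightarrow> integrable \<sigma> (\<lambda>x. (g x)\<^sup>2) \<Longrightarrow>
                 (\<forall>n l. l < harm_dim d n \<longrightarrow> (\<integral>x. g x * Y n l x \<partial>\<sigma>) = 0) \<Longrightarrow>
                 AE x in \<sigma>. g x = 0"
    and mercer: "\<And>x y. x \<in> sphere 0 1 \<Longrightarrow> y \<in> sphere 0 1 \<Longrightarrow>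
                 (\<lambda>n. \<mu> n * (\<Sum>l<harm_dim d n. Y n l x * Y n l y)) sums k x y"
    and mu0: "\<mu> 0 \<ge> 0"
    and \<beta>: "\<beta> > 1"
    and decay: "\<exists>c C. c > 0 \<and> C > 0 \<and> (\<forall>n\<ge>1.
                 c * real n powr (- (real d * \<beta>)) \<le> \<mu> n \<and>
                 \<mu> n \<le> C * real n powr (- (real d * \<beta>)))"
  shows "(\<exists>lam e. spectral_system \<sigma> k lam e) \<and>
         (\<forall>lam e. spectral_system \<sigma> k lam e \<longrightarrow>
            eigenvalue_decay_rate lam \<beta> \<and> embedding_index \<sigma> lam e \<beta> = 1 / \<beta>)"
proof -
  obtain c C where c: "c > 0" and C: "C > 0"
    and bounds: "\<And>n. n \<ge> 1 \<Longrightarrow> c * real n powr (- (real d * \<beta>)) \<le> \<mu> n \<and>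
      \<mu> n \<le> C * real n powr (- (real d * \<beta>))"
    using decay by blast
  interpret sphere_mercer_kernel_decay f \<mu> Y d \<beta> c C
  proof unfold_locales
    show "continuous_on (sphere 0 1) (Y n l)" if "l < harm_dim d n" for n l
      using harm[OF that] by (rule sph_harm_space_continuous_on)
    show "\<mu> n \<ge> 0" for n
      using mu0 bounds[of n] c by (cases n) (auto intro: order.trans[rotated])
    show "AE x in sphere_measure. g x = 0"
      if "g \<in> borel_measurable sphere_measure" "integrable sphere_measure (\<lambda>x. (g x)\<^sup>2)"
        "\<forall>n l. l < harm_dim d n \<longrightarrow> (\<integral>x. g x * Y n l x \<partial>sphere_measure) = 0" for g
      using complete that unfolding \<sigma>_def by blast
  qed (use dim orth mercer \<beta> c C bounds in \<open>simp_all add: d_def \<sigma>_def k_def\<close>)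
  show ?thesis
    unfolding \<sigma>_def k_def
    using spectral_system_exists[OF infinite_mu_pos] eigenvalue_decay_rate_spectral
      embedding_index_spectral by blast
qed

end
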